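(* Let $G=\mathbb{R}\ltimes\mathbb{R}_+=\{(x,y)\mid x\in\mathbb{R},\ y>0\}$ with multiplication $(x_1,y_1)\cdot(x_2,y_2)=(x_1+y_1x_2,\ y_1y_2)$ and identity $\mathrm{id}=(0,1)$. Let $C^+_{\mathrm{id}}\subset T_{\mathrm{id}}G\cong\mathbb{R}^2$ be a non-empty closed convex pointed cone with an anti-norm $\nu_{\mathrm{id}}$, and consider the left-invariant sub-Lorentzian structure on $G$ obtained by left translations, i.e. $C^+_{(x,y)}=\{y\xi\mid\xi\in C^+_{\mathrm{id}}\}$ and $\nu_{(x,y)}(y\xi)=\nu_{\mathrm{id}}(\xi)$. Suppose $C^+_{\mathrm{id}}\cap\{(a,0)\mid a\in\mathbb{R}\}=\{0\}$. Then for every point $p$ reachable from $\mathrm{id}$ by an admissible path, there exists a longest path from $\mathrm{id}$ to $p$.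
   Context: An anti-norm on a closed convex cone $C\subset V$ is an upper semicontinuous function $\nu:V\to\mathbb{R}\sqcup\{-\infty\}$ with $\nu(C)\ge0$, $\nu(V\setminus C)=-\infty$, positively homogeneous of degree 1 and superadditive. A pointed cone has apex $0$ and contains no lines. A Lipschitz path $\gamma:[0,1]\to G$ is admissible if $\dot\gamma(t)\in C^+_{\gamma(t)}$ for a.e. $t$; a longest path from $p_0$ to $p_1$ is an admissible path from $p_0$ to $p_1$ maximizing $\int_0^1\nu_{\gamma(t)}(\dot\gamma(t))\,dt$ among all such admissible paths. *)

theory Defs
  imports "HOL-Analysis.Analysis"
begin

definition G_set :: "(real \<times> real) set" where
  "G_set = {p. snd p > 0}"

definition G_mult :: "real \<times> real \<Rightarrow> real \<times> real \<Rightarrow> real \<times> real" where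
  "G_mult p q = (fst p + snd p * fst q, snd p * snd q)"

definition G_id :: "real \<times> real" where
  "G_id = (0, 1)"

definition usc :: "('v::topological_space \<Rightarrow> ereal) \<Rightarrow> bool" where
  "usc f \<longleftrightarrow> (\<forall>x c. f x < c \<longrightarrow> eventually (\<lambda>y. f y < c) (at x))"

definition pointed_cone :: "'v::real_normed_vector set \<Rightarrow> bool" where
  "pointed_cone C \<longleftrightarrow> C \<noteq> {} \<and> closed C \<and> convex C \<and> cone C \<and>
     (\<forall>v. v \<in> C \<and> - v \<in> C \<longrightarrow> v = 0)"

definition anti_norm :: "'v::real_normed_vector set \<Rightarrow> ('v \<Rightarrow> ereal) \<Rightarrow> bool" where
  "anti_norm C \<nu> \<longleftrightarrow> usc \<nu> \<and> (\<forall>v. \<nu> v \<noteq> \<infinity>) \<and>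
     (\<forall>v\<in>C. \<nu> v \<ge> 0) \<and> (\<forall>v. v \<notin> C \<longrightarrow> \<nu> v = -\<infinity>) \<and>
     (\<forall>c v. c > 0 \<longrightarrow> \<nu> (c *\<^sub>R v) = ereal c * \<nu> v) \<and>
     (\<forall>u v. \<nu> (u + v) \<ge> \<nu> u + \<nu> v)"

definition cone_at :: "(real \<times> real) set \<Rightarrow> real \<times> real \<Rightarrow> (real \<times> real) set" where
  "cone_at C p = {snd p *\<^sub>R \<xi> | \<xi>. \<xi> \<in> C}"

definition nu_at :: "((real \<times> real) \<Rightarrow> ereal) \<Rightarrow> real \<times> real \<Rightarrow> real \<times> real \<Rightarrow> ereal" where
  "nu_at \<nu> p v = \<nu> ((1 / snd p) *\<^sub>R v)"

definition admissible :: "(real \<times> real) set \<Rightarrow> (real \<Rightarrow> real \<times> real) \<Rightarrow> bool" where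
  "admissible C \<gamma> \<longleftrightarrow> (\<exists>L. L-lipschitz_on {0..1} \<gamma>) \<and> (\<forall>t\<in>{0..1}. \<gamma> t \<in> G_set) \<and>
     (AE t in lebesgue. t \<in> {0..1} \<longrightarrow>
        \<gamma> differentiable (at t) \<and> vector_derivative \<gamma> (at t) \<in> cone_at C (\<gamma> t))"

text \<open>Length (the integral of \<nu> along the velocity); nonnegative a.e. for admissible paths.\<close>
definition path_length :: "((real \<times> real) \<Rightarrow> ereal) \<Rightarrow> (real \<Rightarrow> real \<times> real) \<Rightarrow> ennreal" where
  "path_length \<nu> \<gamma> = (\<integral>\<^sup>+ t. e2ennreal (nu_at \<nu> (\<gamma> t) (vector_derivative \<gamma> (at t))) \<partial>lebesgue_on {0..1})"

definition longest_path :: "(real \<times> real) set \<Rightarrow> ((real \<times> real) \<Rightarrow> ereal) \<Rightarrow>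
    real \<times> real \<Rightarrow> real \<times> real \<Rightarrow> (real \<Rightarrow> real \<times> real) \<Rightarrow> bool" where
  "longest_path C \<nu> p0 p1 \<gamma> \<longleftrightarrow> admissible C \<gamma> \<and> \<gamma> 0 = p0 \<and> \<gamma> 1 = p1 \<and>
     (\<forall>\<eta>. admissible C \<eta> \<and> \<eta> 0 = p0 \<and> \<eta> 1 = p1 \<longrightarrow> path_length \<nu> \<eta> \<le> path_length \<nu> \<gamma>)"

end

theory Submission
  imports Defs
begin

text \<open>
  Write \<open>C\<close> as the cone over a compact interval of slopes, \<open>C = {r (u, \<sigma>) | r \<ge> 0, u \<in> slopes}\<close>,
  where \<open>\<sigma> = \<plusminus>1\<close> is the side of the horizontal axis on which \<open>C\<close> lies, and let \<open>\<phi> u = \<nu> (u, \<sigma>)\<close>;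
  \<open>\<phi>\<close> is upper semicontinuous, so every tilted function \<open>\<phi> u - \<mu> u\<close> attains its maximum.
  Along an admissible path with frame velocity \<open>\<xi> = \<gamma>'/y\<close> the coordinates obey \<open>x' = y \<xi>\<^sub>1\<close>,
  \<open>y' = y \<xi>\<^sub>2\<close>, and for every \<open>\<lambda>\<close> the function
  \<open>\<sigma> \<integral>\<^sub>0\<^sup>l\<^sup>n\<^sup>y \<phi>\<^sup>*(\<lambda> e\<^sup>v) dv + \<lambda> x\<close>, with \<open>\<phi>\<^sup>*(\<mu>) = max (\<phi> u - \<mu> u)\<close>, is a calibration:
  its derivative dominates the anti-norm of the velocity, with equality exactly when the slope of
  \<open>\<xi>(t)\<close> maximises \<open>\<phi> u - \<lambda> y(t) u\<close>. Hence every admissible path from \<open>(0, 1)\<close> to \<open>(X, Y)\<close> is no longer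
  than the increment of the calibration, and a path along which the slope is always a maximiser is longest.

  Such a path is \<open>t \<mapsto> (x(t), Y\<^sup>t)\<close> whose slope is the largest maximiser up to a switching time and the
  smallest one afterwards; the two extreme choices bracket the endpoint \<open>X\<close> for a suitable \<open>\<lambda>\<close>
  (obtained as a supremum, using the one-sided continuity of the maximisers in \<open>\<mu>\<close>), and the
  switching time is fixed by the intermediate value theorem. Endpoints on the boundary lines
  \<open>X = c \<sigma> (Y - 1)\<close>, \<open>c\<close> an extreme slope, are reached only by paths of slope \<open>c\<close>, which all have the
  same length; if \<open>C = {0}\<close> every path has length zero.
\<close>

section \<open>Lipschitz functions and integrals on an interval\<close>

lemma tendsto_difference_quotient_sequentially:
  fixes f :: "real \<Rightarrow> real"
  assumes "(f has_real_derivative D) (at x)"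
  shows "(\<lambda>n. (f (x + inverse (real (Suc n))) - f x) / inverse (real (Suc n))) \<longlonglongrightarrow> D"
proof -
  have "(\<lambda>n. x + inverse (real (Suc n))) \<longlonglongrightarrow> x + 0"
    by (intro tendsto_add tendsto_const LIMSEQ_inverse_real_of_nat)
  then have "filterlim (\<lambda>n. x + inverse (real (Suc n))) (at x) sequentially"
    by (auto simp: filterlim_at)
  moreover have "((\<lambda>y. (f y - f x) / (y - x)) \<longlongrightarrow> D) (at x)"
    using assms has_field_derivative_iff by blast
  ultimately show ?thesis
    using filterlim_compose by fastforce
qed

lemma lipschitz_on_clamp:
  fixes g :: "real \<Rightarrow> real"
  assumes "L-lipschitz_on {a..b} g" "a \<le> b"
  shows "L-lipschitz_on UNIV (\<lambda>t. g (max a (min b t)))"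
proof (rule lipschitz_onI)
  have L: "0 \<le> L" using assms(1) lipschitz_on_nonneg by blast
  then show "0 \<le> L" .
  fix s t :: real
  have "dist (g (max a (min b s))) (g (max a (min b t))) \<le> L * dist (max a (min b s)) (max a (min b t))"
    by (rule lipschitz_onD[OF assms(1)]) (use assms(2) in auto)
  also have "\<dots> \<le> L * dist s t"
    by (rule mult_left_mono[OF _ L]) (auto simp: dist_real_def)
  finally show "dist (g (max a (min b s))) (g (max a (min b t))) \<le> L * dist s t" .
qed

lemma integral_difference_quotient_tendsto:
  fixes g :: "real \<Rightarrow> real"
  assumes g: "continuous_on UNIV g" and "a \<le> b"
  shows "(\<lambda>t. (g (t + inverse (real (Suc n))) - g t) / inverse (real (Suc n))) integrable_on {a..b}"
    and "(\<lambda>n. integral {a..b} (\<lambda>t. (g (t + inverse (real (Suc n))) - g t) / inverse (real (Suc n))))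
           \<longlonglongrightarrow> g b - g a"
proof -
  define d where "d n = inverse (real (Suc n))" for n
  have d: "0 < d n" "d n \<le> 1" for n
    by (auto simp: d_def field_simps)
  define P where "P u = integral {a - 1..u} g" for u
  have P': "(P has_real_derivative g u) (at u)" if "u \<in> {a - 1<..<b + 2}" for u
  proof -
    have "(P has_vector_derivative g u) (at u within {a - 1..b + 2})"
      unfolding P_def using that
      by (intro integral_has_vector_derivative continuous_on_subset[OF g]) auto
    moreover have "at u within {a - 1..b + 2} = at u"
      using that by (intro at_within_interior) auto
    ultimately show ?thesis
      by (simp add: has_real_derivative_iff_has_vector_derivative)
  qed
  define Q where "Q n t = (P (t + d n) - P t) / d n" for n t
  have quotient: "((\<lambda>t. (g (t + d n) - g t) / d n) has_integral (Q n b - Q n a)) {a..b}" for n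
  proof (rule fundamental_theorem_of_calculus[OF assms(2)])
    fix t assume t: "t \<in> {a..b}"
    have "((\<lambda>t. P (t + d n)) has_real_derivative g (t + d n)) (at t)"
      using P'[of "t + d n"] t d[of n] by (subst DERIV_shift[symmetric]) auto
    then have "(Q n has_real_derivative (g (t + d n) - g t) / d n) (at t)"
      unfolding Q_def using P'[of t] t by (intro DERIV_cdivide DERIV_diff) auto
    then show "(Q n has_vector_derivative (g (t + d n) - g t) / d n) (at t within {a..b})"
      by (simp add: has_real_derivative_iff_has_vector_derivative has_vector_derivative_at_within)
  qed
  show "(\<lambda>t. (g (t + inverse (real (Suc n))) - g t) / inverse (real (Suc n))) integrable_on {a..b}"
    using quotient[of n] unfolding d_def by (rule has_integral_integrable)
  have "integral {a..b} (\<lambda>t. (g (t + d n) - g t) / d n) = Q n b - Q n a" for n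
    using quotient by (rule integral_unique)
  moreover have "(\<lambda>n. Q n b - Q n a) \<longlonglongrightarrow> g b - g a"
    unfolding Q_def d_def using assms(2)
    by (intro tendsto_diff tendsto_difference_quotient_sequentially P') auto
  ultimately show "(\<lambda>n. integral {a..b} (\<lambda>t. (g (t + inverse (real (Suc n))) - g t) / inverse (real (Suc n))))
      \<longlonglongrightarrow> g b - g a"
    by (simp add: d_def)
qed

lemma lipschitz_has_integral_derivative:
  fixes g g' :: "real \<Rightarrow> real"
  assumes lip: "L-lipschitz_on {a..b} g" and "a \<le> b"
    and der: "AE t in lebesgue. t \<in> {a..b} \<longrightarrow> (g has_real_derivative g' t) (at t)"
  shows "(g' has_integral g b - g a) {a..b}"
proof -
  from der obtain N where N: "N \<in> null_sets lebesgue"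
    and g': "\<And>t. t \<notin> N \<Longrightarrow> t \<in> {a..b} \<Longrightarrow> (g has_real_derivative g' t) (at t)"
    by (auto elim!: AE_E3)
  define E where "E = {a<..<b} - N"
  have negl: "negligible ({a..b} - E)"
  proof (rule negligible_subset)
    show "negligible (N \<union> {a, b})"
      using N by (simp add: negligible_iff_null_sets[symmetric] negligible_finite)
  qed (auto simp: E_def)
  define G where "G t = g (max a (min b t))" for t
  have G_lip: "L-lipschitz_on UNIV G"
    unfolding G_def by (rule lipschitz_on_clamp[OF lip \<open>a \<le> b\<close>])
  then have L: "0 \<le> L" by (rule lipschitz_on_nonneg)
  define q where "q n t = (G (t + inverse (real (Suc n))) - G t) / inverse (real (Suc n))" for n t
  define f where "f n t = (if t \<in> E then q n t else 0)" for n t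
  have q_int: "q n integrable_on {a..b}" and "(\<lambda>n. integral {a..b} (q n)) \<longlonglongrightarrow> G b - G a" for n
    unfolding q_def using integral_difference_quotient_tendsto[OF lipschitz_on_continuous_on[OF G_lip] \<open>a \<le> b\<close>]
    by auto
  moreover have "integral {a..b} (f n) = integral {a..b} (q n)" for n
    by (rule integral_spike[OF negl]) (auto simp: f_def)
  moreover have "G b - G a = g b - g a"
    using \<open>a \<le> b\<close> by (simp add: G_def)
  ultimately have f_tendsto: "(\<lambda>n. integral {a..b} (f n)) \<longlonglongrightarrow> g b - g a"
    by simp
  have f_int: "f n integrable_on {a..b}" for n
    using integrable_spike[OF q_int negl] by (auto simp: f_def)
  have f_bound: "norm (f n t) \<le> L" for n t
  proof -
    have "\<bar>G (t + inverse (real (Suc n))) - G t\<bar> \<le> L * inverse (real (Suc n))"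
      using lipschitz_onD[OF G_lip, of "t + inverse (real (Suc n))" t] by (simp add: dist_real_def)
    then show ?thesis
      using L by (auto simp: f_def q_def abs_div divide_le_eq)
  qed
  have f_lim: "(\<lambda>n. f n t) \<longlonglongrightarrow> (if t \<in> E then g' t else 0)" for t
  proof (cases "t \<in> E")
    case True
    then have "(g has_real_derivative g' t) (at t)"
      using g' by (auto simp: E_def)
    then have "(G has_real_derivative g' t) (at t)"
      by (rule has_field_derivative_transform_within_open[where S="{a<..<b}"])
         (use True in \<open>auto simp: E_def G_def\<close>)
    then show ?thesis
      using True tendsto_difference_quotient_sequentially by (simp add: f_def q_def)
  qed (simp add: f_def)
  have "((\<lambda>t. if t \<in> E then g' t else 0) has_integral g b - g a) {a..b}"
    using dominated_convergence[OF f_int integrable_const_ivl f_bound f_lim] f_tendsto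
    by (metis LIMSEQ_unique has_integral_integral)
  then show ?thesis
    by (rule has_integral_spike[OF negl, rotated]) auto
qed

lemma nn_integral_has_integral_AE_nonneg:
  fixes f :: "real \<Rightarrow> real"
  assumes I: "(f has_integral I) {a..b}" and nn: "AE t in lebesgue. t \<in> {a..b} \<longrightarrow> 0 \<le> f t"
  shows "(\<integral>\<^sup>+t. ennreal (f t) * indicator {a..b} t \<partial>lebesgue) = ennreal I"
proof -
  from nn obtain N where N: "N \<in> null_sets lebesgue" and f: "\<And>t. t \<notin> N \<Longrightarrow> t \<in> {a..b} \<Longrightarrow> 0 \<le> f t"
    by (auto elim!: AE_E3)
  define F where "F t = (if t \<in> {a..b} then max 0 (f t) else 0)" for t
  have "((\<lambda>t. max 0 (f t)) has_integral I) {a..b}"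
    using N f by (intro has_integral_spike[OF _ _ I, of N]) (auto simp: negligible_iff_null_sets)
  then have "(F has_integral I) UNIV"
    unfolding F_def by (subst has_integral_restrict_UNIV)
  then have "(\<integral>\<^sup>+t. ennreal (F t) \<partial>lebesgue) = ennreal I"
    using has_integral_iff_nn_integral_lebesgue[of F] by (auto simp: F_def)
  moreover have "(\<integral>\<^sup>+t. ennreal (f t) * indicator {a..b} t \<partial>lebesgue) = (\<integral>\<^sup>+t. ennreal (F t) \<partial>lebesgue)"
    using nn by (intro nn_integral_cong_AE, eventually_elim) (auto simp: F_def indicator_def ennreal_max_0)
  ultimately show ?thesis
    by simp
qed

lemma has_integral_0_AE_nonneg_imp_AE_0:
  fixes f :: "real \<Rightarrow> real"
  assumes "(f has_integral 0) {a..b}" and nn: "AE t in lebesgue. t \<in> {a..b} \<longrightarrow> 0 \<le> f t"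
  shows "AE t in lebesgue. t \<in> {a..b} \<longrightarrow> f t = 0"
proof -
  have "(\<lambda>t. indicator {a..b} t *\<^sub>R f t) \<in> borel_measurable lebesgue"
    using assms(1) by (rule has_integral_implies_lebesgue_measurable)
  then have "(\<lambda>t. ennreal (indicator {a..b} t *\<^sub>R f t)) \<in> borel_measurable lebesgue"
    by measurable
  moreover have "(\<lambda>t. ennreal (indicator {a..b} t *\<^sub>R f t)) = (\<lambda>t. ennreal (f t) * indicator {a..b} t)"
    by (auto simp: indicator_def fun_eq_iff)
  ultimately have "(\<lambda>t. ennreal (f t) * indicator {a..b} t) \<in> borel_measurable lebesgue"
    by simp
  then have "AE t in lebesgue. ennreal (f t) * indicator {a..b} t = 0"
    using nn_integral_has_integral_AE_nonneg[OF assms] by (simp add: nn_integral_0_iff_AE)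
  with nn show ?thesis
    by eventually_elim (auto simp: indicator_def)
qed

lemma nn_integral_le_lipschitz_increment:
  fixes G G' :: "real \<Rightarrow> real" and N :: "real \<Rightarrow> ereal"
  assumes lip: "L-lipschitz_on {a..b} G" and "a \<le> b"
    and ae: "AE t in lebesgue. t \<in> {a..b} \<longrightarrow>
               (G has_real_derivative G' t) (at t) \<and> 0 \<le> N t \<and> N t \<le> ereal (G' t)"
  shows "(\<integral>\<^sup>+t. e2ennreal (N t) \<partial>lebesgue_on {a..b}) \<le> ennreal (G b - G a)"
proof -
  have "(G' has_integral G b - G a) {a..b}"
    using ae by (intro lipschitz_has_integral_derivative[OF lip \<open>a \<le> b\<close>]) (auto elim!: eventually_mono)
  moreover have "AE t in lebesgue. t \<in> {a..b} \<longrightarrow> 0 \<le> G' t"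
    using ae
  proof eventually_elim
    case (elim t)
    then show ?case
      using order_trans[of 0 "N t" "ereal (G' t)"] by auto
  qed
  ultimately have "(\<integral>\<^sup>+t. ennreal (G' t) * indicator {a..b} t \<partial>lebesgue) = ennreal (G b - G a)"
    by (rule nn_integral_has_integral_AE_nonneg)
  moreover have "(\<integral>\<^sup>+t. e2ennreal (N t) * indicator {a..b} t \<partial>lebesgue)
      \<le> (\<integral>\<^sup>+t. ennreal (G' t) * indicator {a..b} t \<partial>lebesgue)"
    using ae
  proof (intro nn_integral_mono_AE, eventually_elim)
    case (elim t)
    then have "t \<in> {a..b} \<Longrightarrow> e2ennreal (N t) \<le> e2ennreal (ereal (G' t))"
      by (intro e2ennreal_mono) auto
    then show ?case
      by (auto simp: indicator_def)
  qed
  ultimately show ?thesis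
    by (simp add: nn_integral_restrict_space)
qed

lemma nn_integral_eq_lipschitz_increment:
  fixes G G' :: "real \<Rightarrow> real" and N :: "real \<Rightarrow> ereal"
  assumes lip: "L-lipschitz_on {a..b} G" and "a \<le> b"
    and ae: "AE t in lebesgue. t \<in> {a..b} \<longrightarrow>
               (G has_real_derivative G' t) (at t) \<and> 0 \<le> N t \<and> N t = ereal (G' t)"
  shows "(\<integral>\<^sup>+t. e2ennreal (N t) \<partial>lebesgue_on {a..b}) = ennreal (G b - G a)"
proof -
  have "(G' has_integral G b - G a) {a..b}"
    using ae by (intro lipschitz_has_integral_derivative[OF lip \<open>a \<le> b\<close>]) (auto elim!: eventually_mono)
  moreover have "AE t in lebesgue. t \<in> {a..b} \<longrightarrow> 0 \<le> G' t"
    using ae by eventually_elim auto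
  ultimately have "(\<integral>\<^sup>+t. ennreal (G' t) * indicator {a..b} t \<partial>lebesgue) = ennreal (G b - G a)"
    by (rule nn_integral_has_integral_AE_nonneg)
  moreover have "(\<integral>\<^sup>+t. e2ennreal (N t) * indicator {a..b} t \<partial>lebesgue)
      = (\<integral>\<^sup>+t. ennreal (G' t) * indicator {a..b} t \<partial>lebesgue)"
    using ae by (intro nn_integral_cong_AE, eventually_elim) (auto simp: indicator_def e2ennreal_ereal)
  ultimately show ?thesis
    by (simp add: nn_integral_restrict_space)
qed

lemma continuous_derivative_imp_lipschitz_on:
  fixes F F' :: "real \<Rightarrow> real"
  assumes F': "\<And>x. x \<in> {a..b} \<Longrightarrow> (F has_real_derivative F' x) (at x)"
    and cont: "continuous_on {a..b} F'"
  obtains B where "B-lipschitz_on {a..b} F"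
proof -
  obtain B where B: "\<And>x. x \<in> {a..b} \<Longrightarrow> \<bar>F' x\<bar> \<le> B"
    using compact_imp_bounded[OF compact_continuous_image[OF cont compact_Icc]]
    by (force simp: bounded_real)
  have "(max B 0)-lipschitz_on {a..b} F"
  proof (rule bounded_derivative_imp_lipschitz)
    show "(F has_derivative (*) (F' x)) (at x within {a..b})" if "x \<in> {a..b}" for x
      using F'[OF that] by (simp add: has_field_derivative_imp_has_derivative has_derivative_at_withinI)
    show "onorm ((*) (F' x)) \<le> max B 0" if "x \<in> {a..b}" for x
      using B[OF that] by (intro onorm_le) (auto simp: abs_mult intro: mult_right_mono)
  qed auto
  then show ?thesis by (rule that)
qed

lemma lipschitz_on_indefinite_integral:
  fixes f :: "real \<Rightarrow> real"
  assumes f: "f integrable_on {a..b}" and bound: "\<And>t. t \<in> {a..b} \<Longrightarrow> \<bar>f t\<bar> \<le> W"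
    and "a \<le> b"
  shows "W-lipschitz_on {a..b} (\<lambda>t. integral {a..t} f)"
proof (rule lipschitz_onI)
  have le: "dist (integral {a..s} f) (integral {a..t} f) \<le> W * dist s t"
    if st: "s \<in> {a..b}" "t \<in> {a..b}" "s \<le> t" for s t
  proof -
    have "integral {a..t} f = integral {a..s} f + integral {s..t} f"
      using st by (intro Henstock_Kurzweil_Integration.integral_combine[symmetric] integrable_subinterval_real[OF f]) auto
    moreover have "norm (integral {s..t} f) \<le> W * Henstock_Kurzweil_Integration.content {s..t}"
    proof (rule has_integral_bound_real[OF _ finite.emptyI])
      show "0 \<le> W"
        using bound[OF st(1)] by (auto intro: order_trans[OF abs_ge_zero])
      show "(f has_integral integral {s..t} f) {s..t}"
        using st by (intro integrable_integral integrable_subinterval_real[OF f]) auto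
    next
      fix x assume "x \<in> {s..t} - {}"
      then show "norm (f x) \<le> W"
        using bound[of x] st by auto
    qed
    ultimately show ?thesis
      using st by (simp add: dist_real_def abs_minus_commute)
  qed
  fix s t assume "s \<in> {a..b}" "t \<in> {a..b}"
  then show "dist (integral {a..s} f) (integral {a..t} f) \<le> W * dist s t"
    using le[of s t] le[of t s] by (cases "s \<le> t") (auto simp: dist_commute)
next
  show "0 \<le> W"
    using bound[of a] \<open>a \<le> b\<close> by (auto intro: order_trans[OF abs_ge_zero])
qed

lemma upper_semicontinuous_attains_max:
  fixes f :: "'a::metric_space \<Rightarrow> real"
  assumes "compact K" "K \<noteq> {}"
    and usc: "\<And>u c. u \<in> K \<Longrightarrow> f u < c \<Longrightarrow> \<exists>e>0. \<forall>v\<in>K. dist v u < e \<longrightarrow> f v < c"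
  obtains u where "u \<in> K" "\<And>v. v \<in> K \<Longrightarrow> f v \<le> f u"
proof (rule ccontr)
  assume no_max: "\<not> thesis"
  note max_witness = that
  have above: "\<exists>w\<in>K. f u < f w" if "u \<in> K" for u
    using no_max max_witness[OF \<open>u \<in> K\<close>] by (meson not_le)
  define below where "below w = \<Union>{ball z e |z e. \<forall>v\<in>K \<inter> ball z e. f v < f w}" for w
  have "open (below w)" for w
    unfolding below_def by auto
  moreover have "K \<subseteq> (\<Union>w\<in>K. below w)"
  proof
    fix u assume "u \<in> K"
    then obtain w where w: "w \<in> K" "f u < f w"
      using above by blast
    then obtain e where "e > 0" "\<forall>v\<in>K. dist v u < e \<longrightarrow> f v < f w"
      using usc \<open>u \<in> K\<close> by blast
    then have "\<forall>v\<in>K \<inter> ball u e. f v < f w"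
      by (auto simp: dist_commute)
    then have "ball u e \<in> {ball z e |z e. \<forall>v\<in>K \<inter> ball z e. f v < f w}"
      by (intro CollectI exI[of _ u] exI[of _ e] conjI refl)
    then have "u \<in> below w"
      unfolding below_def by (rule UnionI) (simp add: \<open>0 < e\<close>)
    then show "u \<in> (\<Union>w\<in>K. below w)"
      using w by blast
  qed
  ultimately obtain F where F: "F \<subseteq> K" "finite F" "K \<subseteq> (\<Union>w\<in>F. below w)"
    using compactE_image[OF \<open>compact K\<close>] by metis
  then have "F \<noteq> {}"
    using \<open>K \<noteq> {}\<close> by auto
  have "Max (f ` F) \<in> f ` F"
    using F(2) \<open>F \<noteq> {}\<close> by (intro Max_in) auto
  then obtain w where w: "w \<in> F" "f w = Max (f ` F)"
    by (metis imageE)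
  then obtain w' where "w' \<in> F" "w \<in> below w'"
    using F by blast
  then have "f w < f w'"
    using w(1) F(1) unfolding below_def by blast
  moreover have "f w' \<le> f w"
    using w F(2) \<open>w' \<in> F\<close> by simp
  ultimately show False
    by simp
qed

lemma countable_discontinuities_monotone:
  fixes g :: "real \<Rightarrow> real"
  assumes "mono g \<or> antimono g"
  shows "countable {t. \<not> isCont g t}"
  using assms
proof
  assume "antimono g"
  then have "mono (\<lambda>t. - g t)"
    by (auto simp: monotone_def)
  then have "countable {t. \<not> isCont (\<lambda>t. - g t) t}"
    by (rule mono_ctble_discont)
  moreover have "isCont (\<lambda>t. - g t) t \<longleftrightarrow> isCont g t" for t
    using isCont_minus[of t "\<lambda>t. - g t"] isCont_minus[of t g] by auto
  ultimately show ?thesis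
    by simp
qed (rule mono_ctble_discont)

lemma integrable_continuous_times_monotone:
  fixes w g :: "real \<Rightarrow> real"
  assumes w: "continuous_on {a..b} w" and g: "mono g \<or> antimono g"
  shows "(\<lambda>t. w t * g t) integrable_on {a..b}"
proof -
  have "integrable (lebesgue_on {a..b}) g"
    using g
  proof
    assume "antimono g"
    then have "mono_on {a..b} (\<lambda>t. - g t)"
      by (auto simp: monotone_on_def antimono_def)
    then show ?thesis
      using integrable_mono_on by fastforce
  qed (auto intro: integrable_mono_on mono_on_subset)
  then have "g absolutely_integrable_on {a..b}"
    by (simp add: absolutely_integrable_on_def set_integrable_def integrable_restrict_space)
  moreover have "w \<in> borel_measurable (lebesgue_on {a..b})"
    by (rule continuous_imp_measurable_on_sets_lebesgue[OF w]) auto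
  moreover have "bounded (w ` {a..b})"
    by (rule compact_imp_bounded[OF compact_continuous_image[OF w compact_Icc]])
  ultimately have "(\<lambda>t. w t * g t) absolutely_integrable_on {a..b}"
    by (intro absolutely_integrable_bounded_measurable_product_real) auto
  then show ?thesis
    using set_lebesgue_integral_eq_integral(1) by blast
qed

lemma monotone_scaled_exp:
  fixes c l :: real
  shows "mono (\<lambda>t. c * exp (l * t)) \<or> antimono (\<lambda>t. c * exp (l * t))"
proof -
  have "mono (\<lambda>t. exp (l * t)) \<or> antimono (\<lambda>t. exp (l * t))"
  proof (cases "0 \<le> l")
    case True
    then have "mono (\<lambda>t. exp (l * t))"
      by (intro monoI) (simp add: mult_left_mono)
    then show ?thesis ..
  next
    case False
    then have "antimono (\<lambda>t. exp (l * t))"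
      by (intro antimonoI) (simp add: mult_left_mono_neg)
    then show ?thesis ..
  qed
  then show ?thesis
    by (cases "0 \<le> c") (auto simp: monotone_def intro: mult_left_mono mult_left_mono_neg)
qed

lemma monotone_antimono_comp:
  fixes U g :: "real \<Rightarrow> real"
  assumes "antimono U" and "mono g \<or> antimono g"
  shows "mono (\<lambda>t. U (g t)) \<or> antimono (\<lambda>t. U (g t))"
  using assms by (auto simp: monotone_def)

lemma lipschitz_nonneg_derivative_imp_le:
  fixes g g' :: "real \<Rightarrow> real"
  assumes lip: "L-lipschitz_on {a..b} g" and "a \<le> b"
    and ae: "AE t in lebesgue. t \<in> {a..b} \<longrightarrow> (g has_real_derivative g' t) (at t) \<and> 0 \<le> g' t"
  shows "g a \<le> g b"
    and "g b = g a \<Longrightarrow> AE t in lebesgue. t \<in> {a..b} \<longrightarrow> g' t = 0"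
proof -
  have int: "(g' has_integral g b - g a) {a..b}"
    using ae by (intro lipschitz_has_integral_derivative[OF lip \<open>a \<le> b\<close>]) (auto elim!: eventually_mono)
  from ae obtain N where N: "N \<in> null_sets lebesgue" and g': "\<And>t. t \<notin> N \<Longrightarrow> t \<in> {a..b} \<Longrightarrow> 0 \<le> g' t"
    by (auto elim!: AE_E3)
  have "((\<lambda>t. max 0 (g' t)) has_integral g b - g a) {a..b}"
    using N g' by (intro has_integral_spike[OF _ _ int, of N]) (auto simp: negligible_iff_null_sets)
  then have "0 \<le> g b - g a"
    by (rule has_integral_nonneg) simp
  then show "g a \<le> g b"
    by simp
  show "AE t in lebesgue. t \<in> {a..b} \<longrightarrow> g' t = 0" if "g b = g a"
  proof (rule has_integral_0_AE_nonneg_imp_AE_0)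
    show "(g' has_integral 0) {a..b}"
      using int that by simp
    show "AE t in lebesgue. t \<in> {a..b} \<longrightarrow> 0 \<le> g' t"
      using ae by (auto elim!: eventually_mono)
  qed
qed

lemma exp_min_le:
  fixes l t :: real
  assumes "t \<in> {0..1}"
  shows "exp (min 0 l) \<le> exp (l * t)"
proof (cases "0 \<le> l")
  case False
  then have "l * 1 \<le> l * t"
    using assms by (intro mult_left_mono_neg) auto
  then show ?thesis
    by simp
qed (use assms in simp)

lemma exp_le_abs:
  fixes l t :: real
  assumes "t \<in> {0..1}"
  shows "exp (l * t) \<le> exp \<bar>l\<bar>"
proof -
  have "\<bar>l\<bar> * \<bar>t\<bar> \<le> \<bar>l\<bar>"
    using assms by (simp add: mult_left_le)
  then have "l * t \<le> \<bar>l\<bar>"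
    by (metis abs_ge_self abs_mult order_trans)
  then show ?thesis
    by simp
qed

lemma has_integral_scaled_exp:
  fixes c l :: real
  shows "((\<lambda>t. c * l * exp (l * t)) has_integral c * (exp l - 1)) {0..1}"
proof -
  have "((\<lambda>t. c * l * exp (l * t)) has_integral c * exp (l * 1) - c * exp (l * 0)) {0..1}"
  proof (rule fundamental_theorem_of_calculus)
    fix t :: real assume "t \<in> {0..1}"
    have "((\<lambda>t. c * exp (l * t)) has_real_derivative c * (exp (l * t) * (l * 1))) (at t)"
      by (intro derivative_eq_intros) auto
    then show "((\<lambda>t. c * exp (l * t)) has_vector_derivative c * l * exp (l * t)) (at t within {0..1})"
      by (auto simp: has_real_derivative_iff_has_vector_derivative[symmetric] algebra_simps
               intro: has_field_derivative_at_within)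
  qed simp
  then show ?thesis
    by (simp add: algebra_simps)
qed

lemma integrable_antimono_exp_profile:
  fixes U :: "real \<Rightarrow> real"
  assumes "antimono U"
  shows "(\<lambda>t. c * exp (l * t) * U (lam * exp (l * t))) integrable_on {a..b}"
  by (intro integrable_continuous_times_monotone monotone_antimono_comp[OF assms monotone_scaled_exp]
      continuous_intros)

lemma switching_point:
  fixes P Q :: "real \<Rightarrow> real"
  assumes P: "P integrable_on {a..b}" and Q: "Q integrable_on {a..b}" and "a \<le> b"
    and "integral {a..b} Q \<le> X" "X \<le> integral {a..b} P"
  obtains \<tau> where "\<tau> \<in> {a..b}" "integral {a..\<tau>} P + integral {\<tau>..b} Q = X"
proof -
  define S where "S \<tau> = integral {a..\<tau>} P + integral {\<tau>..b} Q" for \<tau>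
  have "continuous_on {a..b} S"
    unfolding S_def
    by (intro continuous_intros indefinite_integral_continuous_1 indefinite_integral_continuous_1' P Q)
  moreover have "S a = integral {a..b} Q" "S b = integral {a..b} P"
    by (simp_all add: S_def)
  ultimately obtain \<tau> where "\<tau> \<in> {a..b}" "S \<tau> = X"
    using IVT'[of S a X b] assms(3-5) by auto
  then show ?thesis
    using that by (simp add: S_def)
qed

lemma has_integral_splice:
  fixes P Q :: "real \<Rightarrow> real"
  assumes P: "P integrable_on {a..b}" and Q: "Q integrable_on {a..b}" and \<tau>: "\<tau> \<in> {a..b}"
  shows "((\<lambda>t. if t \<le> \<tau> then P t else Q t) has_integral integral {a..\<tau>} P + integral {\<tau>..b} Q) {a..b}"
proof (rule has_integral_combine)
  have P': "P integrable_on {a..\<tau>}"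
    using \<tau> by (intro integrable_subinterval_real[OF P]) auto
  show "((\<lambda>t. if t \<le> \<tau> then P t else Q t) has_integral integral {a..\<tau>} P) {a..\<tau>}"
    by (rule has_integral_eq[OF _ integrable_integral[OF P']]) simp
  have Q': "Q integrable_on {\<tau>..b}"
    using \<tau> by (intro integrable_subinterval_real[OF Q]) auto
  show "((\<lambda>t. if t \<le> \<tau> then P t else Q t) has_integral integral {\<tau>..b} Q) {\<tau>..b}"
    by (rule has_integral_spike_finite[of "{\<tau>}", OF _ _ integrable_integral[OF Q']]) auto
qed (use \<tau> in auto)

lemma has_vector_derivative_indefinite_integral_at:
  fixes f :: "real \<Rightarrow> real"
  assumes "f integrable_on {a..b}" "t \<in> {a<..<b}" "isCont f t"
  shows "((\<lambda>u. integral {a..u} f) has_vector_derivative f t) (at t)"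
proof -
  have "t \<in> {a..b} - {}"
    using assms(2) by auto
  moreover have "continuous (at t within {a..b} - {}) f"
    using assms(3) by (rule continuous_at_imp_continuous_within)
  ultimately have "((\<lambda>u. integral {a..u} f) has_vector_derivative f t) (at t within {a..b} - {})"
    by (intro integral_has_vector_derivative_continuous_at[OF assms(1)]) auto
  moreover have "at t within {a..b} - {} = at t"
    using assms(2) by (intro at_within_interior) auto
  ultimately show ?thesis
    by simp
qed

lemma AE_interior_outside_countable:
  fixes B :: "real set"
  assumes "countable B" and "\<And>t. t \<in> {0<..<1} \<Longrightarrow> t \<notin> B \<Longrightarrow> P t"
  shows "AE t in lebesgue. t \<in> {0..1} \<longrightarrow> P t"
proof (rule AE_I')
  show "B \<union> {0, 1} \<in> null_sets lebesgue"
    using assms(1) by (intro null_sets_completionI countable_imp_null_set_lborel) auto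
  show "{t \<in> space lebesgue. \<not> (t \<in> {0..1} \<longrightarrow> P t)} \<subseteq> B \<union> {0, 1}"
  proof
    fix t assume t: "t \<in> {t \<in> space lebesgue. \<not> (t \<in> {0..1} \<longrightarrow> P t)}"
    show "t \<in> B \<union> {0, 1}"
    proof (rule ccontr)
      assume "t \<notin> B \<union> {0, 1}"
      then have "t \<in> {0<..<1}" "t \<notin> B"
        using t by auto
      then show False
        using t assms(2) by blast
    qed
  qed
qed

lemma lipschitz_on_exp_path:
  fixes f :: "real \<Rightarrow> real"
  assumes "f integrable_on {0..1}" and "\<And>t. t \<in> {0..1} \<Longrightarrow> \<bar>f t\<bar> \<le> W"
  shows "\<exists>L. L-lipschitz_on {0..1} (\<lambda>t. (integral {0..t} f, exp (l * t)))"
proof -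
  have "W-lipschitz_on {0..1} (\<lambda>t. integral {0..t} f)"
    using assms by (intro lipschitz_on_indefinite_integral) auto
  moreover have "((\<lambda>t. exp (l * t)) has_real_derivative l * exp (l * t)) (at t)" for t
    by (auto intro!: derivative_eq_intros)
  moreover have "continuous_on {0..1} (\<lambda>t. l * exp (l * t))"
    by (intro continuous_intros)
  ultimately obtain K where "K-lipschitz_on {0..1} (\<lambda>t. exp (l * t))"
    by (metis continuous_derivative_imp_lipschitz_on)
  then show ?thesis
    using lipschitz_on_Pair \<open>W-lipschitz_on {0..1} _\<close> by blast
qed

lemma has_vector_derivative_exp_path:
  fixes f :: "real \<Rightarrow> real"
  assumes "f integrable_on {0..1}" "t \<in> {0<..<1}" "isCont f t"
  shows "((\<lambda>t. (integral {0..t} f, exp (l * t))) has_vector_derivative (f t, l * exp (l * t))) (at t)"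
proof (rule has_vector_derivative_Pair)
  show "((\<lambda>t. integral {0..t} f) has_vector_derivative f t) (at t)"
    using assms by (rule has_vector_derivative_indefinite_integral_at)
  show "((\<lambda>t. exp (l * t)) has_vector_derivative l * exp (l * t)) (at t)"
    unfolding has_real_derivative_iff_has_vector_derivative[symmetric]
    by (auto intro!: derivative_eq_intros)
qed

section \<open>Cones and anti-norms\<close>

lemma pointed_cone_imp_convex_cone: "pointed_cone C \<Longrightarrow> convex_cone C"
  by (auto simp: pointed_cone_def convex_cone_def cone_def conic_def)

lemma cone_sides:
  fixes C :: "(real \<times> real) set"
  assumes pc: "pointed_cone C" and hor: "C \<inter> {(a, 0) | a. True} = {0}"
  shows "(\<forall>\<xi>\<in>C. 0 \<le> snd \<xi>) \<or> (\<forall>\<xi>\<in>C. snd \<xi> \<le> 0)"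
proof (rule ccontr)
  assume "\<not> ?thesis"
  then obtain \<xi> \<eta> where \<xi>: "\<xi> \<in> C" "snd \<xi> < 0" and \<eta>: "\<eta> \<in> C" "0 < snd \<eta>"
    by (auto simp: not_le)
  have C: "convex_cone C"
    using pc by (rule pointed_cone_imp_convex_cone)
  define c where "c = snd \<eta> / (- snd \<xi>)"
  have "0 < c"
    using \<xi> \<eta> by (simp add: c_def divide_pos_neg)
  define v where "v = c *\<^sub>R \<xi> + \<eta>"
  have "v \<in> C"
    unfolding v_def using \<xi> \<eta> \<open>0 < c\<close> by (intro convex_cone_add[OF C] convex_cone_scaleR[OF C]) auto
  moreover have "v \<in> {(a, 0) | a. True}"
    using \<xi> by (intro CollectI exI[of _ "fst v"]) (simp add: prod_eq_iff v_def c_def)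
  ultimately have "v = 0"
    using hor by blast
  then have "- \<eta> = c *\<^sub>R \<xi>"
    unfolding v_def by (simp add: neg_eq_iff_add_eq_0 add.commute)
  then have "- \<eta> \<in> C"
    using convex_cone_scaleR[OF C _ \<xi>(1), of c] \<open>0 < c\<close> by simp
  then have "\<eta> = 0"
    using pc \<eta>(1) unfolding pointed_cone_def by blast
  then show False
    using \<eta>(2) by simp
qed

lemma cone_in_half_plane:
  fixes C :: "(real \<times> real) set"
  assumes "pointed_cone C" and "C \<inter> {(a, 0) | a. True} = {0}"
  obtains \<sigma> :: real where "\<sigma> = 1 \<or> \<sigma> = -1" "\<And>\<xi>. \<xi> \<in> C \<Longrightarrow> 0 \<le> \<sigma> * snd \<xi>"
  using cone_sides[OF assms] that[of 1] that[of "-1"] by auto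

lemma anti_norm_zero:
  assumes "anti_norm C \<nu>" and "0 \<in> C"
  shows "\<nu> 0 = 0"
proof -
  have "\<nu> 0 \<noteq> \<infinity>" "0 \<le> \<nu> 0" and hom: "\<forall>c v. c > 0 \<longrightarrow> \<nu> (c *\<^sub>R v) = ereal c * \<nu> v"
    using assms unfolding anti_norm_def by blast+
  moreover have "\<nu> 0 = ereal 2 * \<nu> 0"
    using hom[rule_format, of 2 0] by simp
  ultimately show ?thesis
    by (cases "\<nu> 0") auto
qed

section \<open>Admissible paths and potentials\<close>

lemma lipschitz_on_fst: "K-lipschitz_on S \<gamma> \<Longrightarrow> K-lipschitz_on S (\<lambda>t. fst (\<gamma> t))"
  by (rule lipschitz_onI) (auto dest: lipschitz_onD lipschitz_on_nonneg intro: order_trans[OF dist_fst_le])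

lemma lipschitz_on_snd: "K-lipschitz_on S \<gamma> \<Longrightarrow> K-lipschitz_on S (\<lambda>t. snd (\<gamma> t))"
  by (rule lipschitz_onI) (auto dest: lipschitz_onD lipschitz_on_nonneg intro: order_trans[OF dist_snd_le])

lemma has_vector_derivative_fst:
  "(\<gamma> has_vector_derivative v) F \<Longrightarrow> ((\<lambda>t. fst (\<gamma> t)) has_real_derivative fst v) F"
  unfolding has_real_derivative_iff_has_vector_derivative has_vector_derivative_def
  by (drule has_derivative_fst) simp

lemma has_vector_derivative_snd:
  "(\<gamma> has_vector_derivative v) F \<Longrightarrow> ((\<lambda>t. snd (\<gamma> t)) has_real_derivative snd v) F"
  unfolding has_real_derivative_iff_has_vector_derivative has_vector_derivative_def
  by (drule has_derivative_snd) simp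

text \<open>The velocity of \<open>\<gamma>\<close> translated back to the identity: \<open>\<gamma>' = y \<xi>\<close> at a point of height \<open>y\<close>.\<close>

definition frame_velocity :: "(real \<Rightarrow> real \<times> real) \<Rightarrow> real \<Rightarrow> real \<times> real" where
  "frame_velocity \<gamma> t = (1 / snd (\<gamma> t)) *\<^sub>R vector_derivative \<gamma> (at t)"

definition frame_potential :: "(real \<Rightarrow> real) \<Rightarrow> real \<Rightarrow> real \<Rightarrow> real \<times> real \<Rightarrow> real" where
  "frame_potential F a b p = F (ln (snd p)) + a * fst p + b * snd p"

text \<open>The rate of change of \<open>frame_potential\<close> along a path at height \<open>y\<close> with frame velocity \<open>\<xi>\<close>.\<close>

definition potential_rate :: "(real \<Rightarrow> real) \<Rightarrow> real \<Rightarrow> real \<Rightarrow> real \<Rightarrow> real \<times> real \<Rightarrow> real" where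
  "potential_rate F' a b y \<xi> = F' (ln y) * snd \<xi> + y * (a * fst \<xi> + b * snd \<xi>)"

lemma admissible_height_pos: "admissible C \<gamma> \<Longrightarrow> t \<in> {0..1} \<Longrightarrow> 0 < snd (\<gamma> t)"
  by (auto simp: admissible_def G_set_def)

lemma admissible_height_bounds:
  assumes adm: "admissible C \<gamma>"
  obtains m M where "0 < m" "\<And>t. t \<in> {0..1} \<Longrightarrow> snd (\<gamma> t) \<in> {m..M}"
proof -
  obtain K where "K-lipschitz_on {0..1} \<gamma>"
    using adm by (auto simp: admissible_def)
  then have cont: "continuous_on {0..1} (\<lambda>t. snd (\<gamma> t))"
    by (intro lipschitz_on_continuous_on lipschitz_on_snd)
  obtain t1 where t1: "t1 \<in> {0..1}" "\<forall>t\<in>{0..1}. snd (\<gamma> t1) \<le> snd (\<gamma> t)"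
    using continuous_attains_inf[OF compact_Icc _ cont] by auto
  obtain t2 where "\<forall>t\<in>{0..1}. snd (\<gamma> t) \<le> snd (\<gamma> t2)"
    using continuous_attains_sup[OF compact_Icc _ cont] by auto
  then show ?thesis
    using that[of "snd (\<gamma> t1)" "snd (\<gamma> t2)"] t1 admissible_height_pos[OF adm t1(1)] by auto
qed

lemma admissible_frame_velocity:
  assumes adm: "admissible C \<gamma>"
  shows "AE t in lebesgue. t \<in> {0..1} \<longrightarrow>
     ((\<lambda>t. fst (\<gamma> t)) has_real_derivative snd (\<gamma> t) * fst (frame_velocity \<gamma> t)) (at t) \<and>
     ((\<lambda>t. snd (\<gamma> t)) has_real_derivative snd (\<gamma> t) * snd (frame_velocity \<gamma> t)) (at t) \<and>
     frame_velocity \<gamma> t \<in> C \<and> nu_at \<nu> (\<gamma> t) (vector_derivative \<gamma> (at t)) = \<nu> (frame_velocity \<gamma> t)"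
proof -
  have "AE t in lebesgue. t \<in> {0..1} \<longrightarrow>
          \<gamma> differentiable at t \<and> vector_derivative \<gamma> (at t) \<in> cone_at C (\<gamma> t)"
    using adm by (simp add: admissible_def)
  then show ?thesis
  proof eventually_elim
    case (elim t)
    show ?case
    proof
      assume t: "t \<in> {0..1}"
      then obtain \<zeta> where d: "(\<gamma> has_vector_derivative snd (\<gamma> t) *\<^sub>R \<zeta>) (at t)" and "\<zeta> \<in> C"
        using elim by (auto simp: cone_at_def vector_derivative_works)
      moreover have "frame_velocity \<gamma> t = \<zeta>"
        using d admissible_height_pos[OF adm t] by (simp add: frame_velocity_def vector_derivative_at)
      ultimately show "((\<lambda>t. fst (\<gamma> t)) has_real_derivative snd (\<gamma> t) * fst (frame_velocity \<gamma> t)) (at t) \<and>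
         ((\<lambda>t. snd (\<gamma> t)) has_real_derivative snd (\<gamma> t) * snd (frame_velocity \<gamma> t)) (at t) \<and>
         frame_velocity \<gamma> t \<in> C \<and> nu_at \<nu> (\<gamma> t) (vector_derivative \<gamma> (at t)) = \<nu> (frame_velocity \<gamma> t)"
        using has_vector_derivative_fst[OF d] has_vector_derivative_snd[OF d] admissible_height_pos[OF adm t]
        by (simp add: nu_at_def frame_velocity_def vector_derivative_at)
    qed
  qed
qed

lemma lipschitz_on_frame_potential:
  fixes F F' :: "real \<Rightarrow> real"
  assumes adm: "admissible C \<gamma>"
    and F: "\<And>s. (F has_real_derivative F' s) (at s)" and F'_cont: "continuous_on UNIV F'"
  obtains L where "L-lipschitz_on {0..1} (\<lambda>t. frame_potential F a b (\<gamma> t))"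
proof -
  obtain K where K: "K-lipschitz_on {0..1} \<gamma>"
    using adm by (auto simp: admissible_def)
  obtain m M where m: "0 < m" and mM: "\<And>t. t \<in> {0..1} \<Longrightarrow> snd (\<gamma> t) \<in> {m..M}"
    using admissible_height_bounds[OF adm] by blast
  have "((\<lambda>y. F (ln y)) has_real_derivative F' (ln y) * (1 / y)) (at y)" if "y \<in> {m..M}" for y
    using that m by (intro DERIV_chain2[OF F] DERIV_ln_divide) auto
  moreover have "continuous_on {m..M} (\<lambda>y. F' (ln y) * (1 / y))"
    using m by (intro continuous_intros continuous_on_compose2[OF F'_cont]) auto
  ultimately obtain B where B: "B-lipschitz_on {m..M} (\<lambda>y. F (ln y))"
    by (rule continuous_derivative_imp_lipschitz_on)
  have "(\<lambda>t. snd (\<gamma> t)) ` {0..1} \<subseteq> {m..M}"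
    using mM by auto
  then have "(B * K)-lipschitz_on {0..1} (\<lambda>t. F (ln (snd (\<gamma> t))))"
    by (intro lipschitz_on_compose2[OF lipschitz_on_snd[OF K] lipschitz_on_subset[OF B]])
  moreover have "(\<bar>a\<bar> * K)-lipschitz_on {0..1} (\<lambda>t. a * fst (\<gamma> t))"
    by (rule lipschitz_on_cmult_real[OF lipschitz_on_fst[OF K]])
  moreover have "(\<bar>b\<bar> * K)-lipschitz_on {0..1} (\<lambda>t. b * snd (\<gamma> t))"
    by (rule lipschitz_on_cmult_real[OF lipschitz_on_snd[OF K]])
  ultimately have "(B * K + \<bar>a\<bar> * K + \<bar>b\<bar> * K)-lipschitz_on {0..1} (\<lambda>t. frame_potential F a b (\<gamma> t))"
    unfolding frame_potential_def by (intro lipschitz_on_add)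
  then show ?thesis
    by (rule that)
qed

lemma has_real_derivative_frame_potential:
  fixes F F' :: "real \<Rightarrow> real"
  assumes adm: "admissible C \<gamma>" and F: "\<And>s. (F has_real_derivative F' s) (at s)"
  shows "AE t in lebesgue. t \<in> {0..1} \<longrightarrow>
           ((\<lambda>t. frame_potential F a b (\<gamma> t)) has_real_derivative
              potential_rate F' a b (snd (\<gamma> t)) (frame_velocity \<gamma> t)) (at t)"
  using admissible_frame_velocity[OF adm, of \<nu>]
proof eventually_elim
  case (elim t)
  show ?case
  proof
    assume t: "t \<in> {0..1}"
    define \<xi> where "\<xi> = frame_velocity \<gamma> t"
    have y: "0 < snd (\<gamma> t)"
      using admissible_height_pos[OF adm t] .
    have dx: "((\<lambda>t. fst (\<gamma> t)) has_real_derivative snd (\<gamma> t) * fst \<xi>) (at t)"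
      and dy: "((\<lambda>t. snd (\<gamma> t)) has_real_derivative snd (\<gamma> t) * snd \<xi>) (at t)"
      using elim t by (auto simp: \<xi>_def)
    have "((\<lambda>t. F (ln (snd (\<gamma> t)))) has_real_derivative
        F' (ln (snd (\<gamma> t))) * (1 / snd (\<gamma> t) * (snd (\<gamma> t) * snd \<xi>))) (at t)"
      by (rule DERIV_chain2[OF F DERIV_chain2[OF DERIV_ln_divide[OF y] dy]])
    then have "((\<lambda>t. frame_potential F a b (\<gamma> t)) has_real_derivative
        F' (ln (snd (\<gamma> t))) * (1 / snd (\<gamma> t) * (snd (\<gamma> t) * snd \<xi>))
          + a * (snd (\<gamma> t) * fst \<xi>) + b * (snd (\<gamma> t) * snd \<xi>)) (at t)"
      unfolding frame_potential_def by (intro DERIV_add DERIV_cmult dx dy)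
    then show "((\<lambda>t. frame_potential F a b (\<gamma> t)) has_real_derivative
        potential_rate F' a b (snd (\<gamma> t)) (frame_velocity \<gamma> t)) (at t)"
      using y by (simp add: potential_rate_def \<xi>_def[symmetric] algebra_simps)
  qed
qed

lemma path_length_le_frame_potential:
  fixes F F' :: "real \<Rightarrow> real"
  assumes adm: "admissible C \<gamma>"
    and F: "\<And>s. (F has_real_derivative F' s) (at s)" "continuous_on UNIV F'"
    and nonneg: "\<And>\<xi>. \<xi> \<in> C \<Longrightarrow> 0 \<le> \<nu> \<xi>"
    and bound: "\<And>y \<xi>. 0 < y \<Longrightarrow> \<xi> \<in> C \<Longrightarrow> \<nu> \<xi> \<le> ereal (potential_rate F' a b y \<xi>)"
  shows "path_length \<nu> \<gamma> \<le> ennreal (frame_potential F a b (\<gamma> 1) - frame_potential F a b (\<gamma> 0))"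
proof -
  obtain L where "L-lipschitz_on {0..1} (\<lambda>t. frame_potential F a b (\<gamma> t))"
    using lipschitz_on_frame_potential[OF adm F] .
  then show ?thesis
    unfolding path_length_def
  proof (rule nn_integral_le_lipschitz_increment[OF _ zero_le_one])
    show "AE t in lebesgue. t \<in> {0..1} \<longrightarrow>
      ((\<lambda>t. frame_potential F a b (\<gamma> t)) has_real_derivative potential_rate F' a b (snd (\<gamma> t)) (frame_velocity \<gamma> t)) (at t) \<and>
      0 \<le> nu_at \<nu> (\<gamma> t) (vector_derivative \<gamma> (at t)) \<and>
      nu_at \<nu> (\<gamma> t) (vector_derivative \<gamma> (at t)) \<le> ereal (potential_rate F' a b (snd (\<gamma> t)) (frame_velocity \<gamma> t))"
      using has_real_derivative_frame_potential[OF adm F(1), where a=a and b=b] admissible_frame_velocity[OF adm, of \<nu>]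
    proof eventually_elim
      case (elim t)
      then show ?case
        using nonneg[of "frame_velocity \<gamma> t"] bound[of "snd (\<gamma> t)" "frame_velocity \<gamma> t"]
          admissible_height_pos[OF adm, of t] by auto
    qed
  qed
qed

lemma path_length_eq_frame_potential:
  fixes F F' :: "real \<Rightarrow> real"
  assumes adm: "admissible C \<gamma>"
    and F: "\<And>s. (F has_real_derivative F' s) (at s)" "continuous_on UNIV F'"
    and nonneg: "\<And>\<xi>. \<xi> \<in> C \<Longrightarrow> 0 \<le> \<nu> \<xi>"
    and eq: "AE t in lebesgue. t \<in> {0..1} \<longrightarrow>
               \<nu> (frame_velocity \<gamma> t) = ereal (potential_rate F' a b (snd (\<gamma> t)) (frame_velocity \<gamma> t))"
  shows "path_length \<nu> \<gamma> = ennreal (frame_potential F a b (\<gamma> 1) - frame_potential F a b (\<gamma> 0))"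
proof -
  obtain L where "L-lipschitz_on {0..1} (\<lambda>t. frame_potential F a b (\<gamma> t))"
    using lipschitz_on_frame_potential[OF adm F] .
  then show ?thesis
    unfolding path_length_def
  proof (rule nn_integral_eq_lipschitz_increment[OF _ zero_le_one])
    show "AE t in lebesgue. t \<in> {0..1} \<longrightarrow>
      ((\<lambda>t. frame_potential F a b (\<gamma> t)) has_real_derivative potential_rate F' a b (snd (\<gamma> t)) (frame_velocity \<gamma> t)) (at t) \<and>
      0 \<le> nu_at \<nu> (\<gamma> t) (vector_derivative \<gamma> (at t)) \<and>
      nu_at \<nu> (\<gamma> t) (vector_derivative \<gamma> (at t)) = ereal (potential_rate F' a b (snd (\<gamma> t)) (frame_velocity \<gamma> t))"
      using has_real_derivative_frame_potential[OF adm F(1), where a=a and b=b] admissible_frame_velocity[OF adm, of \<nu>] eq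
    proof eventually_elim
      case (elim t)
      then show ?case
        using nonneg[of "frame_velocity \<gamma> t"] by auto
    qed
  qed
qed

lemma path_length_trivial_cone:
  assumes "admissible {0} \<gamma>" and "\<nu> 0 = 0"
  shows "path_length \<nu> \<gamma> = 0"
proof -
  have "path_length \<nu> \<gamma> = ennreal (frame_potential (\<lambda>_. 0) 0 0 (\<gamma> 1) - frame_potential (\<lambda>_. 0) 0 0 (\<gamma> 0))"
    using assms admissible_frame_velocity[OF assms(1), of \<nu>]
    by (intro path_length_eq_frame_potential[where F'="\<lambda>_. 0"])
       (auto simp: potential_rate_def elim!: eventually_mono)
  then show ?thesis
    by (simp add: frame_potential_def)
qed

lemma longest_path_trivial_cone:
  assumes "anti_norm {0} \<nu>" "admissible {0} \<gamma>" "\<gamma> 0 = p0" "\<gamma> 1 = p1"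
  shows "longest_path {0} \<nu> p0 p1 \<gamma>"
  using assms path_length_trivial_cone anti_norm_zero[OF assms(1)] by (simp add: longest_path_def)

section \<open>Cones in a half-plane\<close>

locale half_plane_cone =
  fixes C :: "(real \<times> real) set" and \<nu> :: "real \<times> real \<Rightarrow> ereal" and \<sigma> :: real
  assumes pointed: "pointed_cone C" and anti_norm: "anti_norm C \<nu>"
    and horizontal: "C \<inter> {(a, 0) | a. True} = {0}"
    and orientation: "\<sigma> = 1 \<or> \<sigma> = -1" and half_plane: "\<And>\<xi>. \<xi> \<in> C \<Longrightarrow> 0 \<le> \<sigma> * snd \<xi>"
    and nontrivial: "C \<noteq> {0}"
begin

text \<open>Every nonzero vector of \<open>C\<close> is a positive multiple of \<open>(u, \<sigma>)\<close> for exactly one \<open>u \<in> slopes\<close>,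
  and \<open>\<phi>\<close> is the anti-norm in this parametrisation.\<close>

definition slopes :: "real set" where
  "slopes = {u. (u, \<sigma>) \<in> C}"

definition \<phi> :: "real \<Rightarrow> real" where
  "\<phi> u = real_of_ereal (\<nu> (u, \<sigma>))"

lemma sigma_square: "\<sigma> * \<sigma> = 1"
  using orientation by auto

lemma sigma_sigma_mult [simp]: "\<sigma> * (\<sigma> * x) = x"
  by (simp add: mult.assoc[symmetric] sigma_square)

lemma closed_C: "closed C"
  using pointed unfolding pointed_cone_def by blast

lemma convex_cone_C: "convex_cone C"
  using pointed by (rule pointed_cone_imp_convex_cone)

lemma nu_upper_semicontinuous: "usc \<nu>"
  using anti_norm unfolding anti_norm_def by blast

lemma nu_not_infinity: "\<nu> \<xi> \<noteq> \<infinity>"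
  using anti_norm unfolding anti_norm_def by blast

lemma nu_nonneg: "\<xi> \<in> C \<Longrightarrow> 0 \<le> \<nu> \<xi>"
  using anti_norm unfolding anti_norm_def by blast

lemma nu_homogeneous: "0 < c \<Longrightarrow> \<nu> (c *\<^sub>R \<xi>) = ereal c * \<nu> \<xi>"
  using anti_norm unfolding anti_norm_def by blast

lemma nu_finite: "\<xi> \<in> C \<Longrightarrow> \<nu> \<xi> = ereal (real_of_ereal (\<nu> \<xi>))"
  using nu_not_infinity[of \<xi>] nu_nonneg[of \<xi>] by (cases "\<nu> \<xi>") auto

lemma nu_zero: "\<nu> 0 = 0"
  using anti_norm_zero[OF anti_norm] convex_cone_C by (simp add: convex_cone_contains_0)

lemma nu_slope:
  assumes "u \<in> slopes" "0 \<le> r"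
  shows "\<nu> (r *\<^sub>R (u, \<sigma>)) = ereal (r * \<phi> u)"
proof (cases "r = 0")
  case True
  then show ?thesis
    using nu_zero by (simp add: zero_prod_def[symmetric] zero_ereal_def)
next
  case False
  then have "\<nu> (r *\<^sub>R (u, \<sigma>)) = ereal r * \<nu> (u, \<sigma>)"
    using nu_homogeneous[of r "(u, \<sigma>)"] assms(2) by simp
  also have "\<nu> (u, \<sigma>) = ereal (\<phi> u)"
    using nu_finite assms(1) by (simp add: slopes_def \<phi>_def)
  finally show ?thesis
    by simp
qed

lemma phi_nonneg: "u \<in> slopes \<Longrightarrow> 0 \<le> \<phi> u"
  using nu_nonneg by (simp add: slopes_def \<phi>_def real_of_ereal_pos)

lemma slope_in_cone: "u \<in> slopes \<Longrightarrow> 0 \<le> r \<Longrightarrow> r *\<^sub>R (u, \<sigma>) \<in> C"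
  using convex_cone_scaleR[OF convex_cone_C, of r "(u, \<sigma>)"] by (simp add: slopes_def)

lemma cone_cases:
  assumes "\<xi> \<in> C"
  obtains "\<xi> = 0" | r u where "0 < r" "u \<in> slopes" "\<xi> = r *\<^sub>R (u, \<sigma>)"
proof (cases "\<sigma> * snd \<xi> = 0")
  case True
  then have "\<xi> \<in> C \<inter> {(a, 0) | a. True}"
    using assms orientation by (auto intro: exI[of _ "fst \<xi>"] simp: prod_eq_iff)
  then show ?thesis
    using horizontal that(1) by blast
next
  case False
  define r where "r = \<sigma> * snd \<xi>"
  have r: "0 < r"
    unfolding r_def using half_plane[OF assms] False by linarith
  have "r * \<sigma> = snd \<xi>"
    using sigma_square unfolding r_def by (metis mult.assoc mult.commute mult_1)
  then have \<xi>: "\<xi> = r *\<^sub>R (fst \<xi> / r, \<sigma>)"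
    using r by (simp add: prod_eq_iff)
  have "(1 / r) *\<^sub>R \<xi> \<in> C"
    using r assms by (intro convex_cone_scaleR[OF convex_cone_C]) auto
  then have "fst \<xi> / r \<in> slopes"
    using r by (subst (asm) \<xi>) (simp add: slopes_def)
  then show ?thesis
    using that(2) r \<xi> by blast
qed

lemma slopes_nonempty: "slopes \<noteq> {}"
proof -
  obtain \<xi> where "\<xi> \<in> C" "\<xi> \<noteq> 0"
    using nontrivial convex_cone_C by (auto simp: convex_cone_contains_0)
  then show ?thesis
    by (cases rule: cone_cases) auto
qed

lemma slopes_closed: "closed slopes"
proof -
  have "closed ((\<lambda>u. (u, \<sigma>)) -` C)"
    by (rule closed_vimage[OF closed_C]) (intro continuous_intros)
  moreover have "slopes = (\<lambda>u. (u, \<sigma>)) -` C"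
    by (auto simp: slopes_def)
  ultimately show ?thesis
    by simp
qed

text \<open>Slopes of unbounded size would produce, in the limit, a horizontal vector of \<open>C\<close>.\<close>

lemma slopes_bdd_one_side:
  assumes s: "s = 1 \<or> s = -1"
  shows "\<exists>M. \<forall>u\<in>slopes. s * u \<le> M"
proof (rule ccontr)
  assume "\<not> ?thesis"
  then have "\<forall>n::nat. \<exists>u\<in>slopes. real n < s * u"
    by (meson not_le)
  then obtain f where f: "\<And>n. f n \<in> slopes" "\<And>n. real n < s * f n"
    by metis
  have pos: "0 < s * f n" for n
    using f(2)[of n] of_nat_0_le_iff[of n] by linarith
  define v where "v n = (1 / (s * f n)) *\<^sub>R (f n, \<sigma>)" for n
  have vC: "v n \<in> C" for n
    unfolding v_def using f(1) pos[of n] by (intro slope_in_cone) auto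
  have "filterlim (\<lambda>n. s * f n) at_top sequentially"
    by (rule filterlim_at_top_mono[OF filterlim_real_sequentially])
       (use f(2) in \<open>auto intro!: always_eventually less_imp_le\<close>)
  then have "(\<lambda>n. inverse (s * f n)) \<longlonglongrightarrow> 0"
    by (rule tendsto_inverse_0_at_top)
  then have "(\<lambda>n. (s, \<sigma> * inverse (s * f n))) \<longlonglongrightarrow> (s, \<sigma> * 0)"
    by (intro tendsto_Pair tendsto_mult tendsto_const)
  moreover have "v = (\<lambda>n. (s, \<sigma> * inverse (s * f n)))"
  proof
    fix n
    have "f n \<noteq> 0"
      using pos[of n] by auto
    then have "1 / (s * f n) * f n = s"
      using s by (elim disjE) simp_all
    then show "v n = (s, \<sigma> * inverse (s * f n))"
      by (simp add: v_def divide_inverse)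
  qed
  ultimately have "v \<longlonglongrightarrow> (s, 0)"
    by simp
  then have "(s, 0) \<in> C"
    by (rule closed_sequentially[OF closed_C, rotated]) (use vC in blast)
  then have "(s, 0) \<in> C \<inter> {(a, 0) | a. True}"
    by simp
  then have "(s, 0::real) = 0"
    using horizontal by blast
  then show False
    using s by (simp add: zero_prod_def)
qed

lemma slopes_bounded: "bounded slopes"
proof -
  obtain M1 M2 where "\<forall>u\<in>slopes. 1 * u \<le> M1" "\<forall>u\<in>slopes. (- 1) * u \<le> M2"
    using slopes_bdd_one_side[of 1] slopes_bdd_one_side[of "- 1"] by auto
  then have "\<forall>u\<in>slopes. norm u \<le> max M1 M2"
    by (auto simp: abs_if)
  then show ?thesis
    by (auto simp: bounded_iff)
qed

lemma slopes_compact: "compact slopes"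
  using slopes_closed slopes_bounded compact_eq_bounded_closed by blast

lemma slopes_Inf: "Inf slopes \<in> slopes" "u \<in> slopes \<Longrightarrow> Inf slopes \<le> u"
  using closed_contains_Inf[OF slopes_nonempty bounded_imp_bdd_below[OF slopes_bounded] slopes_closed]
    cInf_lower[OF _ bounded_imp_bdd_below[OF slopes_bounded]] by auto

lemma slopes_Sup: "Sup slopes \<in> slopes" "u \<in> slopes \<Longrightarrow> u \<le> Sup slopes"
  using closed_contains_Sup[OF slopes_nonempty bounded_imp_bdd_above[OF slopes_bounded] slopes_closed]
    cSup_upper[OF _ bounded_imp_bdd_above[OF slopes_bounded]] by auto

lemma phi_upper_semicontinuous:
  assumes "u \<in> slopes" "\<phi> u < c"
  shows "\<exists>e>0. \<forall>v\<in>slopes. dist v u < e \<longrightarrow> \<phi> v < c"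
proof -
  have "\<nu> (u, \<sigma>) = ereal (\<phi> u)"
    using assms nu_finite[of "(u, \<sigma>)"] by (simp add: slopes_def \<phi>_def)
  then have "\<nu> (u, \<sigma>) < ereal c"
    using assms(2) by simp
  then have "eventually (\<lambda>y. \<nu> y < ereal c) (at (u, \<sigma>))"
    using nu_upper_semicontinuous by (auto simp: usc_def)
  then obtain e where e: "e > 0" "\<And>y. y \<noteq> (u, \<sigma>) \<Longrightarrow> dist y (u, \<sigma>) < e \<Longrightarrow> \<nu> y < ereal c"
    by (auto simp: eventually_at)
  have "\<phi> v < c" if "v \<in> slopes" "dist v u < e" for v
  proof (cases "v = u")
    case False
    then have "\<nu> (v, \<sigma>) < ereal c"
      using e(2)[of "(v, \<sigma>)"] that by (simp add: dist_Pair_Pair)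
    moreover have "\<nu> (v, \<sigma>) = ereal (\<phi> v)"
      using nu_finite[of "(v, \<sigma>)"] that by (simp add: slopes_def \<phi>_def)
    ultimately show ?thesis
      by simp
  qed (use assms in simp)
  then show ?thesis
    using e(1) by blast
qed

section \<open>Maximising slopes and the conjugate of \<open>\<phi>\<close>\<close>

definition maximisers :: "real \<Rightarrow> real set" where
  "maximisers \<mu> = {u \<in> slopes. \<forall>v\<in>slopes. \<phi> v - \<mu> * v \<le> \<phi> u - \<mu> * u}"

definition umax :: "real \<Rightarrow> real" where
  "umax \<mu> = Sup (maximisers \<mu>)"

definition umin :: "real \<Rightarrow> real" where
  "umin \<mu> = Inf (maximisers \<mu>)"

definition phi_conjugate :: "real \<Rightarrow> real" where
  "phi_conjugate \<mu> = (SUP u\<in>slopes. \<phi> u - \<mu> * u)"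

lemma slopes_abs_bound: obtains R where "0 \<le> R" "\<And>u. u \<in> slopes \<Longrightarrow> \<bar>u\<bar> \<le> R"
proof -
  obtain R where "\<forall>u\<in>slopes. norm u \<le> R"
    using slopes_bounded bounded_iff by blast
  then show ?thesis
    using that[of "max R 0"] by fastforce
qed

lemma upper_semicontinuous_tilted_phi:
  assumes "u \<in> slopes" "\<phi> u - \<mu> * u < c"
  shows "\<exists>e>0. \<forall>v\<in>slopes. dist v u < e \<longrightarrow> \<phi> v - \<mu> * v < c"
proof -
  define \<delta> where "\<delta> = c - (\<phi> u - \<mu> * u)"
  have "0 < \<delta>"
    using assms(2) by (simp add: \<delta>_def)
  then obtain e1 where e1: "0 < e1" "\<forall>v\<in>slopes. dist v u < e1 \<longrightarrow> \<phi> v < \<phi> u + \<delta> / 2"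
    using phi_upper_semicontinuous[OF assms(1), of "\<phi> u + \<delta> / 2"] by auto
  define e where "e = min e1 (\<delta> / (2 * (\<bar>\<mu>\<bar> + 1)))"
  have "0 < e"
    using e1(1) \<open>0 < \<delta>\<close> by (simp add: e_def)
  moreover have "\<phi> v - \<mu> * v < c" if "v \<in> slopes" "dist v u < e" for v
  proof -
    have "\<bar>\<mu> * u - \<mu> * v\<bar> = \<bar>\<mu>\<bar> * dist v u"
      by (simp add: dist_real_def abs_mult[symmetric] right_diff_distrib abs_minus_commute)
    also have "\<dots> \<le> (\<bar>\<mu>\<bar> + 1) * (\<delta> / (2 * (\<bar>\<mu>\<bar> + 1)))"
      using that(2) by (intro mult_mono) (auto simp: e_def)
    also have "\<dots> = \<delta> / 2"
      by (simp add: field_simps)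
    finally have "\<bar>\<mu> * u - \<mu> * v\<bar> \<le> \<delta> / 2" .
    moreover have "\<phi> v < \<phi> u + \<delta> / 2"
      using e1(2) that by (simp add: e_def)
    ultimately show ?thesis
      using \<delta>_def abs_ge_self[of "\<mu> * u - \<mu> * v"] by linarith
  qed
  ultimately show ?thesis
    by blast
qed

lemma maximisers_nonempty: "maximisers \<mu> \<noteq> {}"
proof -
  obtain u where "u \<in> slopes" "\<And>v. v \<in> slopes \<Longrightarrow> \<phi> v - \<mu> * v \<le> \<phi> u - \<mu> * u"
    using upper_semicontinuous_attains_max[OF slopes_compact slopes_nonempty upper_semicontinuous_tilted_phi]
    by blast
  then show ?thesis
    by (auto simp: maximisers_def)
qed

lemma maximisers_subset: "maximisers \<mu> \<subseteq> slopes"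
  by (auto simp: maximisers_def)

lemma maximisers_ordered:
  assumes "\<mu>1 < \<mu>2" "u1 \<in> maximisers \<mu>1" "u2 \<in> maximisers \<mu>2"
  shows "u2 \<le> u1"
proof -
  have "\<phi> u2 - \<mu>1 * u2 \<le> \<phi> u1 - \<mu>1 * u1" "\<phi> u1 - \<mu>2 * u1 \<le> \<phi> u2 - \<mu>2 * u2"
    using assms by (auto simp: maximisers_def)
  then have "0 \<le> (\<mu>2 - \<mu>1) * (u1 - u2)"
    by (simp add: algebra_simps)
  then show ?thesis
    using assms(1) by (simp add: zero_le_mult_iff)
qed

lemma maximisers_limit:
  assumes u: "\<And>n. u n \<in> maximisers (m n)" and "u \<longlonglongrightarrow> v" and "m \<longlonglongrightarrow> \<mu>"
  shows "v \<in> maximisers \<mu>"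
proof -
  have v: "v \<in> slopes"
    using closed_sequentially[OF slopes_closed] u maximisers_subset \<open>u \<longlonglongrightarrow> v\<close> by blast
  have "\<phi> w - \<mu> * w \<le> \<phi> v - \<mu> * v" if w: "w \<in> slopes" for w
  proof (rule ccontr)
    assume not_max: "\<not> ?thesis"
    define c where "c = (\<phi> v + (\<phi> w - \<mu> * w + \<mu> * v)) / 2"
    have c: "\<phi> v < c" "c < \<phi> w - \<mu> * w + \<mu> * v"
      using not_max by (auto simp: c_def)
    obtain e where e: "e > 0" "\<forall>z\<in>slopes. dist z v < e \<longrightarrow> \<phi> z < c"
      using phi_upper_semicontinuous[OF v c(1)] by auto
    have "eventually (\<lambda>n. dist (u n) v < e) sequentially"
      using \<open>u \<longlonglongrightarrow> v\<close> e(1) tendstoD by blast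
    then have "eventually (\<lambda>n. \<phi> w - m n * w \<le> c - m n * u n) sequentially"
    proof eventually_elim
      case (elim n)
      have "\<phi> w - m n * w \<le> \<phi> (u n) - m n * u n"
        using u[of n] w by (auto simp: maximisers_def)
      then show ?case
        using e(2) elim u[of n] maximisers_subset by fastforce
    qed
    moreover have "(\<lambda>n. \<phi> w - m n * w) \<longlonglongrightarrow> \<phi> w - \<mu> * w"
      by (intro tendsto_intros \<open>m \<longlonglongrightarrow> \<mu>\<close>)
    moreover have "(\<lambda>n. c - m n * u n) \<longlonglongrightarrow> c - \<mu> * v"
      by (intro tendsto_intros \<open>m \<longlonglongrightarrow> \<mu>\<close> \<open>u \<longlonglongrightarrow> v\<close>)
    ultimately have "\<phi> w - \<mu> * w \<le> c - \<mu> * v"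
      by (intro tendsto_le[OF trivial_limit_sequentially]) 
    then show False
      using c(2) by simp
  qed
  then show ?thesis
    using v by (simp add: maximisers_def)
qed

lemma maximisers_closed: "closed (maximisers \<mu>)"
  unfolding closed_sequential_limits using maximisers_limit[where m="\<lambda>_. \<mu>"] by auto

lemma maximisers_bdd: "bdd_above (maximisers \<mu>)" "bdd_below (maximisers \<mu>)"
  using bounded_subset[OF slopes_bounded maximisers_subset]
  by (auto intro: bounded_imp_bdd_above bounded_imp_bdd_below)

lemma umax_maximiser: "umax \<mu> \<in> maximisers \<mu>"
  unfolding umax_def using closed_contains_Sup[OF maximisers_nonempty maximisers_bdd(1) maximisers_closed] .

lemma umin_maximiser: "umin \<mu> \<in> maximisers \<mu>"
  unfolding umin_def using closed_contains_Inf[OF maximisers_nonempty maximisers_bdd(2) maximisers_closed] .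

lemma le_umax: "u \<in> maximisers \<mu> \<Longrightarrow> u \<le> umax \<mu>"
  unfolding umax_def using maximisers_bdd by (simp add: cSup_upper)

lemma umin_le: "u \<in> maximisers \<mu> \<Longrightarrow> umin \<mu> \<le> u"
  unfolding umin_def using maximisers_bdd by (simp add: cInf_lower)

lemma umax_slope: "umax \<mu> \<in> slopes" and umin_slope: "umin \<mu> \<in> slopes"
  using umax_maximiser umin_maximiser maximisers_subset by blast+

lemma umin_le_umax: "umin \<mu> \<le> umax \<mu>"
  using umin_le[OF umax_maximiser] .

lemma umax_le_umin: "\<mu>1 < \<mu>2 \<Longrightarrow> umax \<mu>2 \<le> umin \<mu>1"
  using maximisers_ordered umin_maximiser umax_maximiser by blast

lemma antimono_umax: "antimono umax"
  by (rule antimonoI) (metis umax_le_umin umin_le_umax order.trans order.order_iff_strict)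

lemma antimono_umin: "antimono umin"
  by (rule antimonoI) (metis umax_le_umin umin_le_umax order.trans order.order_iff_strict)

lemma phi_conjugate_ge: "u \<in> slopes \<Longrightarrow> \<phi> u - \<mu> * u \<le> phi_conjugate \<mu>"
  using umax_maximiser[of \<mu>] unfolding phi_conjugate_def maximisers_def
  by (intro cSUP_upper bdd_aboveI2) auto

lemma phi_conjugate_eq: "u \<in> maximisers \<mu> \<Longrightarrow> phi_conjugate \<mu> = \<phi> u - \<mu> * u"
  unfolding phi_conjugate_def maximisers_def by (intro cSup_eq_maximum) auto

lemma continuous_phi_conjugate: "continuous_on UNIV phi_conjugate"
proof -
  obtain R where R: "0 \<le> R" "\<And>u. u \<in> slopes \<Longrightarrow> \<bar>u\<bar> \<le> R"
    using slopes_abs_bound by blast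
  have "phi_conjugate \<mu>' - phi_conjugate \<mu> \<le> R * \<bar>\<mu>' - \<mu>\<bar>" for \<mu> \<mu>'
  proof -
    have "phi_conjugate \<mu>' - phi_conjugate \<mu> \<le> (\<mu> - \<mu>') * umax \<mu>'"
      using phi_conjugate_eq[OF umax_maximiser, of \<mu>'] phi_conjugate_ge[of "umax \<mu>'" \<mu>, OF umax_slope]
      by (simp add: algebra_simps)
    also have "\<dots> \<le> \<bar>\<mu>' - \<mu>\<bar> * \<bar>umax \<mu>'\<bar>"
      by (metis abs_ge_self abs_minus_commute abs_mult)
    also have "\<dots> \<le> R * \<bar>\<mu>' - \<mu>\<bar>"
      using mult_left_mono[OF R(2)[OF umax_slope[of \<mu>']] abs_ge_zero[of "\<mu>' - \<mu>"]]
      by (simp add: mult.commute)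
    finally show ?thesis .
  qed
  then have "R-lipschitz_on UNIV phi_conjugate"
    using R(1) by (intro lipschitz_onI) (force simp: dist_real_def abs_le_iff abs_minus_commute)
  then show ?thesis
    by (rule lipschitz_on_continuous_on)
qed

section \<open>Calibration\<close>

definition calibration :: "real \<Rightarrow> real \<Rightarrow> real" where
  "calibration lam s = (LBINT v=0..s. phi_conjugate (lam * exp v))"

lemma continuous_phi_conjugate_exp: "continuous_on UNIV (\<lambda>s. phi_conjugate (lam * exp s))"
  by (rule continuous_on_compose2[OF continuous_phi_conjugate]) (auto intro!: continuous_intros)

lemma has_real_derivative_calibration:
  "(calibration lam has_real_derivative phi_conjugate (lam * exp s)) (at s)"
proof -
  define a b where "a = min 0 s - 1" and "b = max 0 s + 1"
  have "continuous_on {a..b} (\<lambda>v. phi_conjugate (lam * exp v))"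
    by (rule continuous_on_subset[OF continuous_phi_conjugate_exp]) simp
  then have "(calibration lam has_vector_derivative phi_conjugate (lam * exp s)) (at s within {a..b})"
    using interval_integral_FTC2[of a 0 b "\<lambda>v. phi_conjugate (lam * exp v)" s]
    by (auto simp: calibration_def[abs_def] a_def b_def min_def max_def zero_ereal_def)
  moreover have "at s within {a..b} = at s"
    by (rule at_within_interior) (auto simp: a_def b_def)
  ultimately show ?thesis
    by (simp add: has_real_derivative_iff_has_vector_derivative)
qed

lemma calibration_0: "calibration lam 0 = 0"
  by (simp add: calibration_def zero_ereal_def)

lemma nu_le_conjugate:
  assumes "\<xi> \<in> C"
  shows "\<nu> \<xi> \<le> ereal (\<sigma> * snd \<xi> * phi_conjugate \<mu> + \<mu> * fst \<xi>)"
  using assms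
proof (cases rule: cone_cases)
  case (2 r u)
  then have "r * \<phi> u \<le> r * (phi_conjugate \<mu> + \<mu> * u)"
    using phi_conjugate_ge[of u \<mu>] by (intro mult_left_mono) auto
  then show ?thesis
    using 2 nu_slope[of u r] by (simp add: algebra_simps)
qed (simp add: nu_zero)

lemma nu_eq_conjugate:
  assumes "u \<in> maximisers \<mu>" "0 \<le> r"
  shows "\<nu> (r *\<^sub>R (u, \<sigma>)) = ereal (\<sigma> * snd (r *\<^sub>R (u, \<sigma>)) * phi_conjugate \<mu> + \<mu> * fst (r *\<^sub>R (u, \<sigma>)))"
  using assms nu_slope[of u r] subsetD[OF maximisers_subset assms(1)]
  by (simp add: phi_conjugate_eq[OF assms(1)] algebra_simps)

lemma potential_rate_calibration:
  assumes "0 < y"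
  shows "potential_rate (\<lambda>s. \<sigma> * phi_conjugate (lam * exp s)) lam 0 y \<xi>
           = \<sigma> * snd \<xi> * phi_conjugate (lam * y) + lam * y * fst \<xi>"
  using assms by (simp add: potential_rate_def)

lemma path_length_le_calibration:
  assumes "admissible C \<gamma>" "\<gamma> 0 = (0, 1)"
  shows "path_length \<nu> \<gamma> \<le> ennreal (\<sigma> * calibration lam (ln (snd (\<gamma> 1))) + lam * fst (\<gamma> 1))"
proof -
  have "path_length \<nu> \<gamma> \<le> ennreal (frame_potential (\<lambda>s. \<sigma> * calibration lam s) lam 0 (\<gamma> 1)
      - frame_potential (\<lambda>s. \<sigma> * calibration lam s) lam 0 (\<gamma> 0))"
  proof (rule path_length_le_frame_potential[OF assms(1)])
    show "\<And>s. ((\<lambda>s. \<sigma> * calibration lam s) has_real_derivative \<sigma> * phi_conjugate (lam * exp s)) (at s)"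
      by (intro DERIV_cmult has_real_derivative_calibration)
    show "continuous_on UNIV (\<lambda>s. \<sigma> * phi_conjugate (lam * exp s))"
      by (intro continuous_intros continuous_phi_conjugate_exp)
  qed (use nu_nonneg nu_le_conjugate potential_rate_calibration in auto)
  then show ?thesis
    using assms(2) by (simp add: frame_potential_def calibration_0)
qed

lemma path_length_eq_calibration:
  assumes "admissible C \<gamma>" "\<gamma> 0 = (0, 1)"
    and max: "AE t in lebesgue. t \<in> {0..1} \<longrightarrow>
          (\<exists>r\<ge>0. \<exists>u\<in>maximisers (lam * snd (\<gamma> t)). frame_velocity \<gamma> t = r *\<^sub>R (u, \<sigma>))"
  shows "path_length \<nu> \<gamma> = ennreal (\<sigma> * calibration lam (ln (snd (\<gamma> 1))) + lam * fst (\<gamma> 1))"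
proof -
  have "path_length \<nu> \<gamma> = ennreal (frame_potential (\<lambda>s. \<sigma> * calibration lam s) lam 0 (\<gamma> 1)
      - frame_potential (\<lambda>s. \<sigma> * calibration lam s) lam 0 (\<gamma> 0))"
  proof (rule path_length_eq_frame_potential[OF assms(1)])
    show "\<And>s. ((\<lambda>s. \<sigma> * calibration lam s) has_real_derivative \<sigma> * phi_conjugate (lam * exp s)) (at s)"
      by (intro DERIV_cmult has_real_derivative_calibration)
    show "continuous_on UNIV (\<lambda>s. \<sigma> * phi_conjugate (lam * exp s))"
      by (intro continuous_intros continuous_phi_conjugate_exp)
    show "AE t in lebesgue. t \<in> {0..1} \<longrightarrow> \<nu> (frame_velocity \<gamma> t)
        = ereal (potential_rate (\<lambda>s. \<sigma> * phi_conjugate (lam * exp s)) lam 0 (snd (\<gamma> t)) (frame_velocity \<gamma> t))"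
      using max
    proof eventually_elim
      case (elim t)
      show ?case
      proof
        assume t: "t \<in> {0..1}"
        then obtain r u where "0 \<le> r" "u \<in> maximisers (lam * snd (\<gamma> t))" "frame_velocity \<gamma> t = r *\<^sub>R (u, \<sigma>)"
          using elim by blast
        then show "\<nu> (frame_velocity \<gamma> t)
          = ereal (potential_rate (\<lambda>s. \<sigma> * phi_conjugate (lam * exp s)) lam 0 (snd (\<gamma> t)) (frame_velocity \<gamma> t))"
          using nu_eq_conjugate potential_rate_calibration[OF admissible_height_pos[OF assms(1) t]]
          by (simp add: mult.assoc)
      qed
    qed
  qed (use nu_nonneg in auto)
  then show ?thesis
    using assms(2) by (simp add: frame_potential_def calibration_0)
qed

section \<open>Endpoints on the boundary lines\<close>

lemma extreme_slope_gap:
  assumes c: "\<And>u. u \<in> slopes \<Longrightarrow> 0 \<le> \<epsilon> * (u - c)" and "\<xi> \<in> C"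
  shows "0 \<le> \<epsilon> * (fst \<xi> - c * \<sigma> * snd \<xi>)"
  using \<open>\<xi> \<in> C\<close>
proof (cases rule: cone_cases)
  case (2 r u)
  have "c * \<sigma> * snd \<xi> = c * r * (\<sigma> * \<sigma>)"
    using 2 by (simp add: ac_simps)
  then have gap: "\<epsilon> * (fst \<xi> - c * \<sigma> * snd \<xi>) = r * (\<epsilon> * (u - c))"
    using 2 by (simp add: sigma_square algebra_simps)
  show ?thesis
    unfolding gap using 2 c[of u] by simp
qed simp

lemma nu_on_extreme_line:
  assumes "\<xi> \<in> C" "\<epsilon> \<noteq> 0" and c: "\<And>u. u \<in> slopes \<Longrightarrow> 0 \<le> \<epsilon> * (u - c)"
    and "fst \<xi> = c * \<sigma> * snd \<xi>"
  shows "\<nu> \<xi> = ereal (\<sigma> * snd \<xi> * \<phi> c)"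
  using \<open>\<xi> \<in> C\<close>
proof (cases rule: cone_cases)
  case (2 r u)
  have "c * \<sigma> * snd \<xi> = c * r * (\<sigma> * \<sigma>)"
    using 2 by (simp add: ac_simps)
  then have "r * (\<epsilon> * (u - c)) = 0"
    using 2 assms(4) by (simp add: sigma_square algebra_simps)
  then have "u = c"
    using 2(1) \<open>\<epsilon> \<noteq> 0\<close> by simp
  then show ?thesis
    using 2 nu_slope[of u r] by (simp add: mult.commute[of r \<sigma>])
qed (simp add: nu_zero)

text \<open>For an extreme slope \<open>c\<close> (with \<open>\<epsilon> = 1\<close> at the minimum, \<open>\<epsilon> = -1\<close> at the maximum of the slopes),
  \<open>\<epsilon> (x - c \<sigma> y)\<close> never decreases along admissible paths.\<close>

lemma extreme_line_potential:
  assumes adm: "admissible C \<gamma>" and c: "c \<in> slopes" "\<And>u. u \<in> slopes \<Longrightarrow> 0 \<le> \<epsilon> * (u - c)"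
  defines "g \<equiv> \<lambda>t. frame_potential (\<lambda>_. 0) \<epsilon> (- \<epsilon> * c * \<sigma>) (\<gamma> t)"
  shows "g 0 \<le> g 1"
    and "g 1 = g 0 \<Longrightarrow> AE t in lebesgue. t \<in> {0..1} \<longrightarrow>
           potential_rate (\<lambda>_. 0) \<epsilon> (- \<epsilon> * c * \<sigma>) (snd (\<gamma> t)) (frame_velocity \<gamma> t) = 0"
proof -
  obtain L where L: "L-lipschitz_on {0..1} g"
    unfolding g_def by (rule lipschitz_on_frame_potential[OF adm, of "\<lambda>_. 0" "\<lambda>_. 0"]) auto
  have F0: "\<And>s. ((\<lambda>_. 0::real) has_real_derivative 0) (at s)"
    by simp
  have "AE t in lebesgue. t \<in> {0..1} \<longrightarrow>
      (g has_real_derivative potential_rate (\<lambda>_. 0) \<epsilon> (- \<epsilon> * c * \<sigma>) (snd (\<gamma> t)) (frame_velocity \<gamma> t)) (at t) \<and>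
      0 \<le> potential_rate (\<lambda>_. 0) \<epsilon> (- \<epsilon> * c * \<sigma>) (snd (\<gamma> t)) (frame_velocity \<gamma> t)"
    using has_real_derivative_frame_potential[OF adm F0, where a=\<epsilon> and b="- \<epsilon> * c * \<sigma>"]
      admissible_frame_velocity[OF adm, of \<nu>]
  proof eventually_elim
    case (elim t)
    have "potential_rate (\<lambda>_. 0) \<epsilon> (- \<epsilon> * c * \<sigma>) (snd (\<gamma> t)) (frame_velocity \<gamma> t)
        = snd (\<gamma> t) * (\<epsilon> * (fst (frame_velocity \<gamma> t) - c * \<sigma> * snd (frame_velocity \<gamma> t)))"
      by (simp add: potential_rate_def algebra_simps)
    then show ?case
      using elim extreme_slope_gap[OF c(2), of "frame_velocity \<gamma> t"] admissible_height_pos[OF adm, of t]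
      by (auto simp: g_def)
  qed
  then show "g 0 \<le> g 1" "g 1 = g 0 \<Longrightarrow> AE t in lebesgue. t \<in> {0..1} \<longrightarrow>
      potential_rate (\<lambda>_. 0) \<epsilon> (- \<epsilon> * c * \<sigma>) (snd (\<gamma> t)) (frame_velocity \<gamma> t) = 0"
    using lipschitz_nonneg_derivative_imp_le[OF L zero_le_one] by auto
qed

lemma endpoint_extreme_bound:
  assumes adm: "admissible C \<gamma>" "\<gamma> 0 = (0, 1)"
    and c: "c \<in> slopes" "\<And>u. u \<in> slopes \<Longrightarrow> 0 \<le> \<epsilon> * (u - c)"
  shows "0 \<le> \<epsilon> * (fst (\<gamma> 1) - c * \<sigma> * (snd (\<gamma> 1) - 1))"
  using extreme_line_potential(1)[OF adm(1) c] adm(2)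
  by (simp add: frame_potential_def algebra_simps)

lemma path_length_extreme_endpoint:
  assumes adm: "admissible C \<gamma>" "\<gamma> 0 = (0, 1)"
    and c: "c \<in> slopes" "\<And>u. u \<in> slopes \<Longrightarrow> 0 \<le> \<epsilon> * (u - c)" and "\<epsilon> \<noteq> 0"
    and endpoint: "fst (\<gamma> 1) = c * \<sigma> * (snd (\<gamma> 1) - 1)"
  shows "path_length \<nu> \<gamma> = ennreal (\<phi> c * \<sigma> * ln (snd (\<gamma> 1)))"
proof -
  have "AE t in lebesgue. t \<in> {0..1} \<longrightarrow>
      potential_rate (\<lambda>_. 0) \<epsilon> (- \<epsilon> * c * \<sigma>) (snd (\<gamma> t)) (frame_velocity \<gamma> t) = 0"
  proof (rule extreme_line_potential(2)[OF adm(1) c])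
    show "frame_potential (\<lambda>_. 0) \<epsilon> (- \<epsilon> * c * \<sigma>) (\<gamma> 1) = frame_potential (\<lambda>_. 0) \<epsilon> (- \<epsilon> * c * \<sigma>) (\<gamma> 0)"
      using adm(2) by (simp add: frame_potential_def endpoint algebra_simps)
  qed
  then have "AE t in lebesgue. t \<in> {0..1} \<longrightarrow>
      \<nu> (frame_velocity \<gamma> t) = ereal (potential_rate (\<lambda>_. \<phi> c * \<sigma>) 0 0 (snd (\<gamma> t)) (frame_velocity \<gamma> t))"
    using admissible_frame_velocity[OF adm(1), of \<nu>]
  proof eventually_elim
    case (elim t)
    show ?case
    proof
      assume t: "t \<in> {0..1}"
      have "fst (frame_velocity \<gamma> t) = c * \<sigma> * snd (frame_velocity \<gamma> t)"
        using elim t admissible_height_pos[OF adm(1) t] \<open>\<epsilon> \<noteq> 0\<close>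
        by (auto simp: potential_rate_def algebra_simps)
      then show "\<nu> (frame_velocity \<gamma> t) = ereal (potential_rate (\<lambda>_. \<phi> c * \<sigma>) 0 0 (snd (\<gamma> t)) (frame_velocity \<gamma> t))"
        using nu_on_extreme_line[OF _ \<open>\<epsilon> \<noteq> 0\<close> c(2), of "frame_velocity \<gamma> t"] elim t
        by (simp add: potential_rate_def algebra_simps)
    qed
  qed
  then have "path_length \<nu> \<gamma> = ennreal (frame_potential (\<lambda>s. \<phi> c * \<sigma> * s) 0 0 (\<gamma> 1)
      - frame_potential (\<lambda>s. \<phi> c * \<sigma> * s) 0 0 (\<gamma> 0))"
    by (intro path_length_eq_frame_potential[OF adm(1)] DERIV_cmult_Id) (auto intro: nu_nonneg)
  then show ?thesis
    using adm(2) by (simp add: frame_potential_def)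
qed

section \<open>Extremal paths\<close>

text \<open>Horizontal displacement of the path \<open>t \<mapsto> (x(t), exp (l t))\<close> whose frame velocity is
  \<open>\<sigma> l (U (lam exp (l t)), \<sigma>)\<close>.\<close>

definition drift :: "(real \<Rightarrow> real) \<Rightarrow> real \<Rightarrow> real \<Rightarrow> real" where
  "drift U l lam = integral {0..1} (\<lambda>t. \<sigma> * l * exp (l * t) * U (lam * exp (l * t)))"

lemma umax_left_limit:
  assumes "\<And>n. m n < \<mu>" "incseq m" "m \<longlonglongrightarrow> \<mu>"
  shows "(\<lambda>n. umax (m n)) \<longlonglongrightarrow> umax \<mu>"
proof -
  have dec: "decseq (\<lambda>n. umax (m n))"
    using antimono_umax \<open>incseq m\<close> by (auto simp: monotone_def)
  have lower: "\<forall>n. umax \<mu> \<le> umax (m n)"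
    using antimono_umax assms(1) by (auto simp: antimono_def less_imp_le)
  obtain L where L: "(\<lambda>n. umax (m n)) \<longlonglongrightarrow> L"
    using decseq_convergent[OF dec lower] by blast
  have "L \<in> maximisers \<mu>"
    using maximisers_limit[OF umax_maximiser L \<open>m \<longlonglongrightarrow> \<mu>\<close>] .
  then have "L \<le> umax \<mu>"
    by (rule le_umax)
  moreover have "umax \<mu> \<le> L"
    using L lower by (intro LIMSEQ_le_const) auto
  ultimately show ?thesis
    using L by simp
qed

lemma umax_right_limit:
  assumes "\<And>n. \<mu> < m n" "decseq m" "m \<longlonglongrightarrow> \<mu>"
  shows "(\<lambda>n. umax (m n)) \<longlonglongrightarrow> umin \<mu>"
proof -
  have inc: "incseq (\<lambda>n. umax (m n))"
    using antimono_umax \<open>decseq m\<close> by (auto simp: monotone_def)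
  have upper: "\<forall>n. umax (m n) \<le> umin \<mu>"
    using umax_le_umin assms(1) by blast
  obtain L where L: "(\<lambda>n. umax (m n)) \<longlonglongrightarrow> L"
    using incseq_convergent[OF inc upper] by blast
  have "L \<in> maximisers \<mu>"
    using maximisers_limit[OF umax_maximiser L \<open>m \<longlonglongrightarrow> \<mu>\<close>] .
  then have "umin \<mu> \<le> L"
    by (rule umin_le)
  moreover have "L \<le> umin \<mu>"
    using L upper by (intro LIMSEQ_le_const2) auto
  ultimately show ?thesis
    using L by simp
qed

lemma drift_umax_tendsto:
  assumes "\<And>t. t \<in> {0..1} \<Longrightarrow> (\<lambda>n. umax (lam n * exp (l * t))) \<longlonglongrightarrow> U t"
    and "(\<lambda>t. \<sigma> * l * exp (l * t) * U t) integrable_on {0..1}"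
  shows "(\<lambda>n. drift umax l (lam n)) \<longlonglongrightarrow> integral {0..1} (\<lambda>t. \<sigma> * l * exp (l * t) * U t)"
proof -
  obtain R where R: "0 \<le> R" "\<And>u. u \<in> slopes \<Longrightarrow> \<bar>u\<bar> \<le> R"
    using slopes_abs_bound by blast
  have "norm (\<sigma> * l * exp (l * t) * umax (lam n * exp (l * t))) \<le> \<bar>\<sigma> * l\<bar> * exp \<bar>l\<bar> * R"
    if "t \<in> {0..1}" for n t
  proof -
    have "norm (\<sigma> * l * exp (l * t) * umax (lam n * exp (l * t)))
        = \<bar>\<sigma> * l\<bar> * exp (l * t) * \<bar>umax (lam n * exp (l * t))\<bar>"
      by (simp add: abs_mult)
    also have "\<dots> \<le> \<bar>\<sigma> * l\<bar> * exp \<bar>l\<bar> * R"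
      using exp_le_abs[OF that, of l] R(1) R(2)[OF umax_slope]
      by (intro mult_mono mult_left_mono) auto
    finally show ?thesis .
  qed
  then show ?thesis
    unfolding drift_def
    by (intro dominated_convergence(2)[where h="\<lambda>_. \<bar>\<sigma> * l\<bar> * exp \<bar>l\<bar> * R"]
        integrable_antimono_exp_profile antimono_umax integrable_const_ivl tendsto_mult_left assms)
qed

lemma phi_conjugate_0_nonneg: "0 \<le> phi_conjugate 0"
  using phi_conjugate_ge[OF slopes_Sup(1), of 0] phi_nonneg[OF slopes_Sup(1)] by simp

lemma umin_near_Sup:
  assumes "0 < \<delta>" "phi_conjugate 0 / \<delta> < m"
  shows "Sup slopes - \<delta> \<le> umin (- m)"
proof -
  have "0 \<le> phi_conjugate 0 / \<delta>"
    using assms(1) phi_conjugate_0_nonneg by simp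
  then have "0 < m"
    using assms(2) by linarith
  have "\<phi> (Sup slopes) + m * Sup slopes \<le> \<phi> (umin (- m)) + m * umin (- m)"
    using umin_maximiser[of "- m"] slopes_Sup(1) by (auto simp: maximisers_def)
  moreover have "\<phi> (umin (- m)) \<le> phi_conjugate 0" "0 \<le> \<phi> (Sup slopes)"
    using phi_conjugate_ge[of "umin (- m)" 0, OF umin_slope] phi_nonneg[OF slopes_Sup(1)] by auto
  ultimately have "m * (Sup slopes - umin (- m)) \<le> phi_conjugate 0"
    by (simp add: algebra_simps)
  also have "\<dots> < m * \<delta>"
    using assms by (simp add: pos_divide_less_eq mult.commute)
  finally show ?thesis
    using \<open>0 < m\<close> by simp
qed

lemma umax_near_Inf:
  assumes "0 < \<delta>" "phi_conjugate 0 / \<delta> < m"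
  shows "umax m \<le> Inf slopes + \<delta>"
proof -
  have "0 \<le> phi_conjugate 0 / \<delta>"
    using assms(1) phi_conjugate_0_nonneg by simp
  then have "0 < m"
    using assms(2) by linarith
  have "\<phi> (Inf slopes) - m * Inf slopes \<le> \<phi> (umax m) - m * umax m"
    using umax_maximiser[of m] slopes_Inf(1) by (auto simp: maximisers_def)
  moreover have "\<phi> (umax m) \<le> phi_conjugate 0" "0 \<le> \<phi> (Inf slopes)"
    using phi_conjugate_ge[of "umax m" 0, OF umax_slope] phi_nonneg[OF slopes_Inf(1)] by auto
  ultimately have "m * (umax m - Inf slopes) \<le> phi_conjugate 0"
    by (simp add: algebra_simps)
  also have "\<dots> < m * \<delta>"
    using assms by (simp add: pos_divide_less_eq mult.commute)
  finally show ?thesis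
    using \<open>0 < m\<close> by simp
qed

lemma drift_weight_pos: "0 < \<sigma> * l \<Longrightarrow> 0 < \<sigma> * (exp l - 1)"
  using orientation by (auto simp: zero_less_mult_iff)

lemma drift_ge_const:
  assumes "0 \<le> \<sigma> * l" "antimono U" "\<And>t. t \<in> {0..1} \<Longrightarrow> k \<le> U (lam * exp (l * t))"
  shows "\<sigma> * (exp l - 1) * k \<le> drift U l lam"
proof (rule has_integral_le[OF has_integral_mult_left[OF has_integral_scaled_exp]])
  show "((\<lambda>t. \<sigma> * l * exp (l * t) * U (lam * exp (l * t))) has_integral drift U l lam) {0..1}"
    unfolding drift_def by (intro integrable_integral integrable_antimono_exp_profile assms(2))
  show "\<sigma> * l * exp (l * t) * k \<le> \<sigma> * l * exp (l * t) * U (lam * exp (l * t))" if "t \<in> {0..1}" for t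
    using assms(1) assms(3)[OF that] by (intro mult_left_mono) auto
qed

lemma drift_le_const:
  assumes "0 \<le> \<sigma> * l" "antimono U" "\<And>t. t \<in> {0..1} \<Longrightarrow> U (lam * exp (l * t)) \<le> k"
  shows "drift U l lam \<le> \<sigma> * (exp l - 1) * k"
proof (rule has_integral_le[OF _ has_integral_mult_left[OF has_integral_scaled_exp]])
  show "((\<lambda>t. \<sigma> * l * exp (l * t) * U (lam * exp (l * t))) has_integral drift U l lam) {0..1}"
    unfolding drift_def by (intro integrable_integral integrable_antimono_exp_profile assms(2))
  show "\<sigma> * l * exp (l * t) * U (lam * exp (l * t)) \<le> \<sigma> * l * exp (l * t) * k" if "t \<in> {0..1}" for t
    using assms(1) assms(3)[OF that] by (intro mult_left_mono) auto
qed

lemma drift_umin_le_umax: "0 \<le> \<sigma> * l \<Longrightarrow> drift umin l lam \<le> drift umax l lam"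
  unfolding drift_def
  by (intro integral_le integrable_antimono_exp_profile antimono_umin antimono_umax mult_left_mono umin_le_umax)
     auto

lemma drift_umax_antimono:
  assumes "0 \<le> \<sigma> * l" "lam \<le> lam'"
  shows "drift umax l lam' \<le> drift umax l lam"
  unfolding drift_def
proof (intro integral_le integrable_antimono_exp_profile antimono_umax mult_left_mono)
  fix t
  show "umax (lam' * exp (l * t)) \<le> umax (lam * exp (l * t))"
    using antimono_umax assms(2) by (auto simp: antimono_def)
qed (use assms(1) in auto)

lemma drift_umin_large:
  assumes "0 < \<sigma> * l" "X < Sup slopes * (\<sigma> * (exp l - 1))"
  obtains lam where "X \<le> drift umin l lam"
proof -
  define I \<delta> gm where "I = \<sigma> * (exp l - 1)" and "\<delta> = (Sup slopes * I - X) / I" and "gm = exp (min 0 l)"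
  define lam where "lam = - (phi_conjugate 0 / \<delta> + 1) / gm"
  have "0 < I" "0 < \<delta>" "0 < gm"
    using drift_weight_pos[OF assms(1)] assms(2) by (auto simp: I_def \<delta>_def gm_def field_simps)
  have "Sup slopes - \<delta> \<le> umin (lam * exp (l * t))" if "t \<in> {0..1}" for t
  proof -
    have "1 \<le> exp (l * t) / gm"
      using exp_min_le[OF that, of l] \<open>0 < gm\<close> by (simp add: gm_def)
    then have "(phi_conjugate 0 / \<delta> + 1) * 1 \<le> (phi_conjugate 0 / \<delta> + 1) * (exp (l * t) / gm)"
      using \<open>0 < \<delta>\<close> phi_conjugate_0_nonneg by (intro mult_left_mono) auto
    also have "\<dots> = - (lam * exp (l * t))"
      using \<open>0 < gm\<close> by (simp add: lam_def field_simps)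
    finally have "phi_conjugate 0 / \<delta> < - (lam * exp (l * t))"
      by simp
    then show ?thesis
      using umin_near_Sup[OF \<open>0 < \<delta>\<close>] by fastforce
  qed
  then have "I * (Sup slopes - \<delta>) \<le> drift umin l lam"
    unfolding I_def using assms(1) by (intro drift_ge_const antimono_umin) auto
  moreover have "I * (Sup slopes - \<delta>) = X"
    using \<open>0 < I\<close> by (simp add: \<delta>_def field_simps)
  ultimately show ?thesis
    using that by simp
qed

lemma drift_umax_small:
  assumes "0 < \<sigma> * l" "Inf slopes * (\<sigma> * (exp l - 1)) < X"
  obtains \<Lambda> where "\<And>lam. \<Lambda> \<le> lam \<Longrightarrow> drift umax l lam < X"
proof -
  define I \<delta> gm where "I = \<sigma> * (exp l - 1)" and "\<delta> = (X - Inf slopes * I) / (2 * I)" and "gm = exp (min 0 l)"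
  define \<Lambda> where "\<Lambda> = (phi_conjugate 0 / \<delta> + 1) / gm"
  have "0 < I" "0 < \<delta>" "0 < gm"
    using drift_weight_pos[OF assms(1)] assms(2) by (auto simp: I_def \<delta>_def gm_def field_simps)
  have "drift umax l lam < X" if "\<Lambda> \<le> lam" for lam
  proof -
    have "umax (lam * exp (l * t)) \<le> Inf slopes + \<delta>" if "t \<in> {0..1}" for t
    proof -
      have "1 \<le> exp (l * t) / gm"
        using exp_min_le[OF that, of l] \<open>0 < gm\<close> by (simp add: gm_def)
      then have "(phi_conjugate 0 / \<delta> + 1) * 1 \<le> (phi_conjugate 0 / \<delta> + 1) * (exp (l * t) / gm)"
        using \<open>0 < \<delta>\<close> phi_conjugate_0_nonneg by (intro mult_left_mono) auto
      also have "\<dots> = \<Lambda> * exp (l * t)"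
        by (simp add: \<Lambda>_def)
      also have "\<dots> \<le> lam * exp (l * t)"
        using \<open>\<Lambda> \<le> lam\<close> by simp
      finally have "phi_conjugate 0 / \<delta> < lam * exp (l * t)"
        by simp
      then show ?thesis
        by (rule umax_near_Inf[OF \<open>0 < \<delta>\<close>])
    qed
    then have "drift umax l lam \<le> I * (Inf slopes + \<delta>)"
      unfolding I_def using assms(1) by (intro drift_le_const antimono_umax) auto
    moreover have "I * (Inf slopes + \<delta>) < X"
      using \<open>0 < I\<close> \<open>0 < \<delta>\<close> by (simp add: \<delta>_def field_simps)
    ultimately show ?thesis
      by simp
  qed
  then show ?thesis
    by (rule that)
qed

lemma drift_umax_left_limit:
  "(\<lambda>n. drift umax l (lam - inverse (real (Suc n)))) \<longlonglongrightarrow> drift umax l lam"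
proof -
  have "(\<lambda>n. drift umax l (lam - inverse (real (Suc n))))
      \<longlonglongrightarrow> integral {0..1} (\<lambda>t. \<sigma> * l * exp (l * t) * umax (lam * exp (l * t)))"
  proof (rule drift_umax_tendsto)
    fix t :: real
    show "(\<lambda>n. umax ((lam - inverse (real (Suc n))) * exp (l * t))) \<longlonglongrightarrow> umax (lam * exp (l * t))"
    proof (rule umax_left_limit)
      show "(lam - inverse (real (Suc n))) * exp (l * t) < lam * exp (l * t)" for n
        by simp
      show "incseq (\<lambda>n. (lam - inverse (real (Suc n))) * exp (l * t))"
        by (intro monoI mult_right_mono diff_left_mono) (auto intro: le_imp_inverse_le)
      show "(\<lambda>n. (lam - inverse (real (Suc n))) * exp (l * t)) \<longlonglongrightarrow> lam * exp (l * t)"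
        using tendsto_diff[OF tendsto_const LIMSEQ_inverse_real_of_nat, of lam]
        by (intro tendsto_mult_right) simp
    qed
  qed (intro integrable_antimono_exp_profile antimono_umax)
  then show ?thesis
    by (simp add: drift_def)
qed

lemma drift_umax_right_limit:
  "(\<lambda>n. drift umax l (lam + inverse (real (Suc n)))) \<longlonglongrightarrow> drift umin l lam"
proof -
  have "(\<lambda>n. drift umax l (lam + inverse (real (Suc n))))
      \<longlonglongrightarrow> integral {0..1} (\<lambda>t. \<sigma> * l * exp (l * t) * umin (lam * exp (l * t)))"
  proof (rule drift_umax_tendsto)
    fix t :: real
    show "(\<lambda>n. umax ((lam + inverse (real (Suc n))) * exp (l * t))) \<longlonglongrightarrow> umin (lam * exp (l * t))"
    proof (rule umax_right_limit)
      show "lam * exp (l * t) < (lam + inverse (real (Suc n))) * exp (l * t)" for n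
        by simp
      show "decseq (\<lambda>n. (lam + inverse (real (Suc n))) * exp (l * t))"
        by (intro antimonoI mult_right_mono add_left_mono) (auto intro: le_imp_inverse_le)
      show "(\<lambda>n. (lam + inverse (real (Suc n))) * exp (l * t)) \<longlonglongrightarrow> lam * exp (l * t)"
        using tendsto_add[OF tendsto_const LIMSEQ_inverse_real_of_nat, of lam]
        by (intro tendsto_mult_right) simp
    qed
  qed (intro integrable_antimono_exp_profile antimono_umin)
  then show ?thesis
    by (simp add: drift_def)
qed

lemma drift_intermediate_value:
  assumes "0 < \<sigma> * l" "Inf slopes * (\<sigma> * (exp l - 1)) < X" "X < Sup slopes * (\<sigma> * (exp l - 1))"
  obtains lam where "drift umin l lam \<le> X" "X \<le> drift umax l lam"
proof -
  define \<Lambda>s where "\<Lambda>s = {lam. X \<le> drift umax l lam}"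
  obtain lam0 where "X \<le> drift umin l lam0"
    using drift_umin_large[OF assms(1,3)] .
  then have "lam0 \<in> \<Lambda>s"
    using drift_umin_le_umax[of l lam0] assms(1) by (simp add: \<Lambda>s_def)
  then have ne: "\<Lambda>s \<noteq> {}"
    by blast
  obtain \<Lambda> where \<Lambda>: "\<And>lam. \<Lambda> \<le> lam \<Longrightarrow> drift umax l lam < X"
    using drift_umax_small[OF assms(1,2)] by metis
  have "x \<le> \<Lambda>" if "x \<in> \<Lambda>s" for x
  proof (rule ccontr)
    assume "\<not> x \<le> \<Lambda>"
    then show False
      using \<Lambda>[of x] that by (simp add: \<Lambda>s_def)
  qed
  then have bdd: "bdd_above \<Lambda>s"
    by (rule bdd_aboveI)
  define lam where "lam = Sup \<Lambda>s"
  have "X \<le> drift umax l (lam - inverse (real (Suc n)))" for n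
  proof -
    obtain x where "x \<in> \<Lambda>s" "lam - inverse (real (Suc n)) < x"
      using less_cSup_iff[OF ne bdd, of "lam - inverse (real (Suc n))"] by (auto simp: lam_def)
    then show ?thesis
      using drift_umax_antimono[of l "lam - inverse (real (Suc n))" x] assms(1) by (simp add: \<Lambda>s_def)
  qed
  then have "X \<le> drift umax l lam"
    by (intro LIMSEQ_le_const[OF drift_umax_left_limit]) auto
  moreover have "drift umax l (lam + inverse (real (Suc n))) < X" for n
  proof -
    have "lam + inverse (real (Suc n)) \<notin> \<Lambda>s"
      using cSup_upper[OF _ bdd, of "lam + inverse (real (Suc n))"] by (force simp: lam_def)
    then show ?thesis
      by (simp add: \<Lambda>s_def)
  qed
  then have "drift umin l lam \<le> X"
    by (intro LIMSEQ_le_const2[OF drift_umax_right_limit]) (auto intro: less_imp_le)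
  ultimately show ?thesis
    using that by blast
qed

lemma sigma_mult_sigma: "\<sigma> * l * \<sigma> = l"
proof -
  have "\<sigma> * l * \<sigma> = l * (\<sigma> * \<sigma>)"
    by (simp add: ac_simps)
  then show ?thesis
    by (simp add: sigma_square)
qed

lemma admissible_exp_path:
  fixes s :: "real \<Rightarrow> real"
  assumes "0 < \<sigma> * l" and slope: "\<And>t. s t \<in> slopes"
    and int: "(\<lambda>t. \<sigma> * l * exp (l * t) * s t) integrable_on {0..1}"
    and "countable B" and cont: "\<And>t. t \<notin> B \<Longrightarrow> isCont (\<lambda>t. \<sigma> * l * exp (l * t) * s t) t"
  defines "\<gamma> \<equiv> \<lambda>t. (integral {0..t} (\<lambda>t. \<sigma> * l * exp (l * t) * s t), exp (l * t))"
  shows "admissible C \<gamma>"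
    and "AE t in lebesgue. t \<in> {0..1} \<longrightarrow> frame_velocity \<gamma> t = (\<sigma> * l) *\<^sub>R (s t, \<sigma>)"
proof -
  define f where "f t = \<sigma> * l * exp (l * t) * s t" for t
  have \<gamma>_eq: "\<gamma> = (\<lambda>t. (integral {0..t} f, exp (l * t)))"
    by (simp add: \<gamma>_def f_def[abs_def])
  have f_int: "f integrable_on {0..1}"
    using int by (simp add: f_def[abs_def])
  obtain R where R: "0 \<le> R" "\<And>u. u \<in> slopes \<Longrightarrow> \<bar>u\<bar> \<le> R"
    using slopes_abs_bound by blast
  have "\<bar>f t\<bar> \<le> \<bar>\<sigma> * l\<bar> * exp \<bar>l\<bar> * R" if "t \<in> {0..1}" for t
    unfolding f_def abs_mult using exp_le_abs[OF that, of l] R(1) R(2)[OF slope]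
    by (intro mult_mono) auto
  then have lip: "\<exists>L. L-lipschitz_on {0..1} \<gamma>"
    unfolding \<gamma>_eq by (rule lipschitz_on_exp_path[OF f_int])
  have "AE t in lebesgue. t \<in> {0..1} \<longrightarrow>
      (\<gamma> has_vector_derivative exp (l * t) *\<^sub>R ((\<sigma> * l) *\<^sub>R (s t, \<sigma>))) (at t)"
  proof (rule AE_interior_outside_countable[OF \<open>countable B\<close>])
    fix t assume t: "t \<in> {0<..<1}" "t \<notin> B"
    have "(\<gamma> has_vector_derivative (f t, l * exp (l * t))) (at t)"
      unfolding \<gamma>_eq using f_int cont[OF t(2)] t(1) unfolding f_def[abs_def]
      by (intro has_vector_derivative_exp_path) auto
    moreover have "(f t, l * exp (l * t)) = exp (l * t) *\<^sub>R ((\<sigma> * l) *\<^sub>R (s t, \<sigma>))"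
      using sigma_mult_sigma by (simp add: f_def algebra_simps)
    ultimately show "(\<gamma> has_vector_derivative exp (l * t) *\<^sub>R ((\<sigma> * l) *\<^sub>R (s t, \<sigma>))) (at t)"
      by simp
  qed
  moreover have "(\<sigma> * l) *\<^sub>R (s t, \<sigma>) \<in> C" for t
    using slope_in_cone[OF slope] \<open>0 < \<sigma> * l\<close> by simp
  ultimately have "AE t in lebesgue. t \<in> {0..1} \<longrightarrow> \<gamma> differentiable at t \<and>
      vector_derivative \<gamma> (at t) \<in> cone_at C (\<gamma> t) \<and> frame_velocity \<gamma> t = (\<sigma> * l) *\<^sub>R (s t, \<sigma>)"
    by (elim AE_mp, intro AE_I2)
       (force simp: vector_derivative_at \<gamma>_def cone_at_def frame_velocity_def intro: differentiableI_vector)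
  moreover have "\<forall>t\<in>{0..1}. \<gamma> t \<in> G_set"
    by (simp add: G_set_def \<gamma>_def)
  ultimately show "admissible C \<gamma>" "AE t in lebesgue. t \<in> {0..1} \<longrightarrow> frame_velocity \<gamma> t = (\<sigma> * l) *\<^sub>R (s t, \<sigma>)"
    unfolding admissible_def using lip by (auto elim: AE_mp)
qed

definition switched_slope :: "real \<Rightarrow> real \<Rightarrow> real \<Rightarrow> real \<Rightarrow> real" where
  "switched_slope l lam \<tau> t = (if t \<le> \<tau> then umax (lam * exp (l * t)) else umin (lam * exp (l * t)))"

lemma switched_slope_maximiser: "switched_slope l lam \<tau> t \<in> maximisers (lam * exp (l * t))"
  by (simp add: switched_slope_def umax_maximiser umin_maximiser)

lemma countable_discontinuities_switched_profile:
  obtains B where "countable B"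
    "\<And>t. t \<notin> B \<Longrightarrow> isCont (\<lambda>t. \<sigma> * l * exp (l * t) * switched_slope l lam \<tau> t) t"
proof -
  define B where "B = {\<tau>} \<union> {t. \<not> isCont (\<lambda>t. umax (lam * exp (l * t))) t}
      \<union> {t. \<not> isCont (\<lambda>t. umin (lam * exp (l * t))) t}"
  have "countable {t. \<not> isCont (\<lambda>t. umax (lam * exp (l * t))) t}"
    by (intro countable_discontinuities_monotone monotone_antimono_comp[OF antimono_umax monotone_scaled_exp])
  moreover have "countable {t. \<not> isCont (\<lambda>t. umin (lam * exp (l * t))) t}"
    by (intro countable_discontinuities_monotone monotone_antimono_comp[OF antimono_umin monotone_scaled_exp])
  ultimately have "countable B"
    by (simp add: B_def)
  moreover have "isCont (\<lambda>t. \<sigma> * l * exp (l * t) * switched_slope l lam \<tau> t) t" if "t \<notin> B" for t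
  proof (cases "t < \<tau>")
    case True
    have "isCont (\<lambda>t. \<sigma> * l * exp (l * t) * umax (lam * exp (l * t))) t"
      using that by (intro continuous_intros) (auto simp: B_def)
    then have "continuous (at t within UNIV) (\<lambda>t. \<sigma> * l * exp (l * t) * switched_slope l lam \<tau> t)"
      by (rule continuous_transform_within[where \<delta>="\<tau> - t"])
         (use True in \<open>auto simp: switched_slope_def dist_real_def\<close>)
    then show ?thesis
      by simp
  next
    case False
    then have "\<tau> < t"
      using that by (auto simp: B_def)
    have "isCont (\<lambda>t. \<sigma> * l * exp (l * t) * umin (lam * exp (l * t))) t"
      using that by (intro continuous_intros) (auto simp: B_def)
    then have "continuous (at t within UNIV) (\<lambda>t. \<sigma> * l * exp (l * t) * switched_slope l lam \<tau> t)"
      by (rule continuous_transform_within[where \<delta>="t - \<tau>"])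
         (use \<open>\<tau> < t\<close> in \<open>auto simp: switched_slope_def dist_real_def\<close>)
    then show ?thesis
      by simp
  qed
  ultimately show ?thesis
    using that by blast
qed

lemma extremal_path:
  assumes "0 < \<sigma> * l" "drift umin l lam \<le> X" "X \<le> drift umax l lam"
  obtains \<gamma> where "admissible C \<gamma>" "\<gamma> 0 = (0, 1)" "\<gamma> 1 = (X, exp l)"
    "AE t in lebesgue. t \<in> {0..1} \<longrightarrow>
       (\<exists>r\<ge>0. \<exists>u\<in>maximisers (lam * snd (\<gamma> t)). frame_velocity \<gamma> t = r *\<^sub>R (u, \<sigma>))"
proof -
  define P where "P t = \<sigma> * l * exp (l * t) * umax (lam * exp (l * t))" for t
  define Q where "Q t = \<sigma> * l * exp (l * t) * umin (lam * exp (l * t))" for t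
  have P: "P integrable_on {0..1}" and Q: "Q integrable_on {0..1}"
    unfolding P_def[abs_def] Q_def[abs_def]
    by (intro integrable_antimono_exp_profile antimono_umax antimono_umin)+
  obtain \<tau> where \<tau>: "\<tau> \<in> {0..1}" "integral {0..\<tau>} P + integral {\<tau>..1} Q = X"
    using switching_point[OF P Q zero_le_one] assms(2,3) by (auto simp: drift_def P_def[abs_def] Q_def[abs_def])
  define f where "f t = \<sigma> * l * exp (l * t) * switched_slope l lam \<tau> t" for t
  have "f = (\<lambda>t. if t \<le> \<tau> then P t else Q t)"
    by (auto simp: f_def P_def Q_def switched_slope_def)
  then have f: "(f has_integral X) {0..1}"
    using has_integral_splice[OF P Q \<tau>(1)] \<tau>(2) by simp
  obtain B where B: "countable B"
    "\<And>t. t \<notin> B \<Longrightarrow> isCont (\<lambda>t. \<sigma> * l * exp (l * t) * switched_slope l lam \<tau> t) t"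
    using countable_discontinuities_switched_profile[where l=l and lam=lam and \<tau>=\<tau>] by metis
  define \<gamma> where "\<gamma> t = (integral {0..t} f, exp (l * t))" for t
  have adm: "admissible C \<gamma>"
    and vel: "AE t in lebesgue. t \<in> {0..1} \<longrightarrow> frame_velocity \<gamma> t = (\<sigma> * l) *\<^sub>R (switched_slope l lam \<tau> t, \<sigma>)"
    using admissible_exp_path[OF assms(1) _ _ B] subsetD[OF maximisers_subset switched_slope_maximiser]
      has_integral_integrable[OF f]
    unfolding \<gamma>_def[abs_def] f_def[abs_def] by blast+
  show ?thesis
  proof (rule that[OF adm])
    show "\<gamma> 0 = (0, 1)" "\<gamma> 1 = (X, exp l)"
      using integral_unique[OF f] by (simp_all add: \<gamma>_def)
    show "AE t in lebesgue. t \<in> {0..1} \<longrightarrow>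
        (\<exists>r\<ge>0. \<exists>u\<in>maximisers (lam * snd (\<gamma> t)). frame_velocity \<gamma> t = r *\<^sub>R (u, \<sigma>))"
      using vel
    proof eventually_elim
      case (elim t)
      show ?case
        using elim assms(1) switched_slope_maximiser[of l lam \<tau> t]
        by (intro impI exI[of _ "\<sigma> * l"] conjI bexI[of _ "switched_slope l lam \<tau> t"]) (auto simp: \<gamma>_def)
    qed
  qed
qed

lemma longest_path_interior:
  assumes "0 < Y" "Inf slopes * (\<sigma> * (Y - 1)) < X" "X < Sup slopes * (\<sigma> * (Y - 1))"
  shows "\<exists>\<gamma>. longest_path C \<nu> (0, 1) (X, Y) \<gamma>"
proof -
  define l where "l = ln Y"
  have Y: "exp l = Y"
    using assms(1) by (simp add: l_def)
  have "Inf slopes \<le> Sup slopes"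
    using slopes_Inf(2)[OF slopes_Sup(1)] .
  have "0 < \<sigma> * (Y - 1)"
  proof (rule ccontr)
    assume "\<not> 0 < \<sigma> * (Y - 1)"
    then have "Sup slopes * (\<sigma> * (Y - 1)) \<le> Inf slopes * (\<sigma> * (Y - 1))"
      using \<open>Inf slopes \<le> Sup slopes\<close> by (intro mult_right_mono_neg) auto
    then show False
      using assms(2,3) by linarith
  qed
  have "0 < \<sigma> * l"
    using orientation
  proof
    assume "\<sigma> = 1"
    then show ?thesis
      using \<open>0 < \<sigma> * (Y - 1)\<close> by (simp add: l_def)
  next
    assume "\<sigma> = -1"
    then show ?thesis
      using \<open>0 < \<sigma> * (Y - 1)\<close> assms(1) by (simp add: l_def)
  qed
  obtain lam where lam: "drift umin l lam \<le> X" "X \<le> drift umax l lam"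
    using drift_intermediate_value[OF \<open>0 < \<sigma> * l\<close>, unfolded Y, OF assms(2,3)] .
  obtain \<gamma> where \<gamma>: "admissible C \<gamma>" "\<gamma> 0 = (0, 1)" "\<gamma> 1 = (X, Y)"
    "AE t in lebesgue. t \<in> {0..1} \<longrightarrow>
       (\<exists>r\<ge>0. \<exists>u\<in>maximisers (lam * snd (\<gamma> t)). frame_velocity \<gamma> t = r *\<^sub>R (u, \<sigma>))"
    using extremal_path[OF \<open>0 < \<sigma> * l\<close> lam, unfolded Y] .
  have "path_length \<nu> \<gamma> = ennreal (\<sigma> * calibration lam (ln Y) + lam * X)"
    using path_length_eq_calibration[OF \<gamma>(1,2,4)] \<gamma>(3) by simp
  moreover have "path_length \<nu> \<eta> \<le> ennreal (\<sigma> * calibration lam (ln Y) + lam * X)"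
    if "admissible C \<eta>" "\<eta> 0 = (0, 1)" "\<eta> 1 = (X, Y)" for \<eta>
    using path_length_le_calibration[OF that(1,2)] that(3) by simp
  ultimately show ?thesis
    using \<gamma> by (auto simp: longest_path_def)
qed

lemma longest_path_extreme_endpoint:
  assumes "admissible C \<gamma>" "\<gamma> 0 = (0, 1)" "\<gamma> 1 = (X, Y)"
    and "c \<in> slopes" "\<And>u. u \<in> slopes \<Longrightarrow> 0 \<le> \<epsilon> * (u - c)" "\<epsilon> \<noteq> 0" "X = c * \<sigma> * (Y - 1)"
  shows "longest_path C \<nu> (0, 1) (X, Y) \<gamma>"
  unfolding longest_path_def
  using assms path_length_extreme_endpoint[OF _ _ assms(4-6)] by simp

lemma longest_path_exists:
  assumes "admissible C \<gamma>0" "\<gamma>0 0 = (0, 1)" "\<gamma>0 1 = (X, Y)"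
  shows "\<exists>\<gamma>. longest_path C \<nu> (0, 1) (X, Y) \<gamma>"
proof -
  have "Inf slopes * (\<sigma> * (Y - 1)) \<le> X"
    using endpoint_extreme_bound[OF assms(1,2) slopes_Inf(1), of 1] slopes_Inf(2) assms(3)
    by (simp add: algebra_simps)
  moreover have "X \<le> Sup slopes * (\<sigma> * (Y - 1))"
    using endpoint_extreme_bound[OF assms(1,2) slopes_Sup(1), of "- 1"] slopes_Sup(2) assms(3)
    by (simp add: algebra_simps)
  moreover have "0 < Y"
    using admissible_height_pos[OF assms(1), of 1] assms(3) by simp
  ultimately consider (lower) "X = Inf slopes * (\<sigma> * (Y - 1))" | (upper) "X = Sup slopes * (\<sigma> * (Y - 1))"
    | (between) "Inf slopes * (\<sigma> * (Y - 1)) < X" "X < Sup slopes * (\<sigma> * (Y - 1))"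
    by (auto simp: le_less)
  then show ?thesis
  proof cases
    case lower
    then have "longest_path C \<nu> (0, 1) (X, Y) \<gamma>0"
      by (intro longest_path_extreme_endpoint[OF assms slopes_Inf(1), of 1]) (auto simp: mult.assoc slopes_Inf(2))
    then show ?thesis
      by blast
  next
    case upper
    then have "longest_path C \<nu> (0, 1) (X, Y) \<gamma>0"
      by (intro longest_path_extreme_endpoint[OF assms slopes_Sup(1), of "- 1"]) (auto simp: mult.assoc slopes_Sup(2))
    then show ?thesis
      by blast
  next
    case between
    then show ?thesis
      using longest_path_interior[OF \<open>0 < Y\<close>] by blast
  qed
qed

end

theorem mainTheorem8:
  fixes C :: "(real \<times> real) set" and \<nu> :: "real \<times> real \<Rightarrow> ereal"
  assumes "pointed_cone C"
    and "anti_norm C \<nu>"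
    and "C \<inter> {(a, 0) | a. True} = {0}"
    and "admissible C \<gamma>0" and "\<gamma>0 0 = G_id" and "\<gamma>0 1 = p"
  shows "\<exists>\<gamma>. longest_path C \<nu> G_id p \<gamma>"
proof -
  obtain \<sigma> where \<sigma>: "\<sigma> = 1 \<or> \<sigma> = -1" "\<And>\<xi>. \<xi> \<in> C \<Longrightarrow> 0 \<le> \<sigma> * snd \<xi>"
    using cone_in_half_plane[OF assms(1,3)] by blast
  show ?thesis
  proof (cases "C = {0}")
    case True
    then show ?thesis
      using longest_path_trivial_cone assms(2,4-6) by blast
  next
    case False
    interpret half_plane_cone C \<nu> \<sigma>
      by (rule half_plane_cone.intro[OF assms(1-3) \<sigma> False])
    show ?thesis
      using longest_path_exists[OF assms(4)] assms(5,6) by (cases p) (simp add: G_id_def)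
  qed
qed

end
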